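(* Let $\ell>0$, $r>0$, $\lambda>0$, and let $G$ be a probability distribution on $[0,\infty)$ with $s_1=\int s\,G(ds)$, $s_2=\int s^2\,G(ds)$. Let $W$ be the greedy polling population process on the circle $S$ of circumference $\ell$ (described in the context). Assume $\lambda s_1<1$ and $s_2<\infty$, and let $0<a\le\min(\ell/2,2r)$. Then there exist $\alpha>0$, $b>0$ and an integer $n$ such that $v(\zeta)=\|\zeta\|_a$ satisfies $\mathbb{E}_\zeta v(W_1)-v(\zeta)\le-\alpha$ for all $\zeta\in M_+(S)$ with $\|\zeta\|>n$, and $\mathbb{E}_\zeta v(W_1)-v(\zeta)\le b$ for all $\zeta\in M_+(S)$ with $\|\zeta\|\le n$.
   Context: $d$ is the shortest-arc distance and $m$ the uniform probability distribution on $S$; $B_\rho(x)=\{y: d(x,y)<\rho\}$. $M_+(S)$ is the set of finite counting measures on $S$; $\|\zeta\|=\zeta(S)$; $x\in\zeta$ means $\zeta(\{x\})>0$; $\Gamma_\zeta(x)=\{y: d(x,y)<d(x',y)\ \forall x'\in\zeta,\ x'\ne x\}$. $\|\zeta\|_a=\sqrt{\int\int(a-d(x,y))_+\,\zeta(dx)\,\zeta(dy)}$. $W$ is the Markov chain on $M_+(S)$ with the following transition from $W_t=\zeta$: add $N$ customers at i.i.d. $m$-distributed locations, $P(N=n)=\int e^{-\lambda s}\frac{(\lambda s)^n}{n!}G(ds)$, giving $\zeta'$; then choose $U$ uniform on $S$; if $\zeta'(B_r(U))=0$ nothing changes, otherwise one customer at the atom of $\zeta'$ nearest to $U$ is removed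 (equivalently, for each $x\in\zeta'$ one customer at $x$ is removed with probability $m(B_r(x)\cap\Gamma_{\zeta'}(x))$). $\mathbb{E}_\zeta$ is expectation given $W_0=\zeta$. *)

theory Defs
  imports "HOL-Probability.Probability" "HOL-Library.Multiset"
begin

text \<open>The circle S of circumference l is represented by the half-open interval [0,l).\<close>

definition circ :: "real \<Rightarrow> real set" where
  "circ l = {0..<l}"

definition circ_dist :: "real \<Rightarrow> real \<Rightarrow> real \<Rightarrow> real" where
  "circ_dist l x y = min \<bar>x - y\<bar> (l - \<bar>x - y\<bar>)"

definition unif :: "real \<Rightarrow> real measure" where
  "unif l = uniform_measure lborel {0..<l}"

text \<open>Finite counting measures on S, represented as finite multisets of points of S.\<close>
definition count_meas :: "real \<Rightarrow> real multiset set" where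
  "count_meas l = {\<zeta>. set_mset \<zeta> \<subseteq> circ l}"

definition a_norm :: "real \<Rightarrow> real \<Rightarrow> real multiset \<Rightarrow> real" where
  "a_norm l a \<zeta> =
     sqrt (sum_mset (image_mset (\<lambda>x. sum_mset (image_mset (\<lambda>y. max 0 (a - circ_dist l x y)) \<zeta>)) \<zeta>))"

definition rball :: "real \<Rightarrow> real \<Rightarrow> real \<Rightarrow> real set" where
  "rball l \<rho> x = {y \<in> circ l. circ_dist l x y < \<rho>}"

definition voronoi :: "real \<Rightarrow> real multiset \<Rightarrow> real \<Rightarrow> real set" where
  "voronoi l \<zeta> x = {y \<in> circ l. \<forall>x'\<in>#\<zeta>. x' \<noteq> x \<longrightarrow> circ_dist l x y < circ_dist l x' y}"

text \<open>Probability that one customer at atom x of zeta is served: m(B_r(x) \<inter> Gamma_zeta(x)).\<close>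
definition serve_prob :: "real \<Rightarrow> real \<Rightarrow> real multiset \<Rightarrow> real \<Rightarrow> real" where
  "serve_prob l r \<zeta> x = measure (unif l) (rball l r x \<inter> voronoi l \<zeta> x)"

definition serve_exp :: "real \<Rightarrow> real \<Rightarrow> (real multiset \<Rightarrow> real) \<Rightarrow> real multiset \<Rightarrow> real" where
  "serve_exp l r f \<zeta> =
     (\<Sum>x\<in>set_mset \<zeta>. serve_prob l r \<zeta> x * f (\<zeta> - {#x#}))
     + (1 - (\<Sum>x\<in>set_mset \<zeta>. serve_prob l r \<zeta> x)) * f \<zeta>"

definition arrival_prob :: "real \<Rightarrow> real measure \<Rightarrow> nat \<Rightarrow> ennreal" where
  "arrival_prob lam G n = (\<integral>\<^sup>+ s. ennreal (exp (- lam * s) * (lam * s) ^ n / fact n) \<partial>G)"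

text \<open>E_zeta f(W_1) for nonnegative f (as an extended nonnegative real):
  add N i.i.d. uniform customers, then perform the service step.\<close>
definition step_exp :: "real \<Rightarrow> real \<Rightarrow> real \<Rightarrow> real measure \<Rightarrow> (real multiset \<Rightarrow> real)
    \<Rightarrow> real multiset \<Rightarrow> ennreal" where
  "step_exp l r lam G f \<zeta> =
     (\<Sum>n. arrival_prob lam G n *
        (\<integral>\<^sup>+ y. ennreal (serve_exp l r f (\<zeta> + mset (map y [0..<n])))
           \<partial>(PiM {..<n} (\<lambda>_. unif l))))"

end

theory Submission
  imports Defs
begin

text \<open>v = a_norm l a is the square root of the quadratic form
  Q \<zeta> = \<Sum>x,y\<in>\<zeta>. K x y with the tent kernel K x y = max 0 (a - d x y). Serving the customer at
  x changes Q by a - 2 \<Sum>y\<in>\<zeta>. K x y, and the tangent bound sqrt q \<le> (q + t^2) / (2 t) at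
  t = v \<zeta> turns the expected change of Q into the drift of v. The geometric heart is that the
  greedy server lowers Q in expectation by at least 2 \<Sum>z\<in>\<zeta>. \<integral> K u z m(du) - a, where
  \<integral> K u z m(du) \<ge> a^2 / (4 l): on the arc from an atom to the next one the tent K \<cdot> z lies
  below the chord through its end values, and the first and last min r (gap / 2) of the arc
  belong to the service regions of its two ends. Arrivals raise Q by at most twice their kernel
  mass against \<zeta> plus a times their squared number, whose expectations are controlled by the
  first two moments of the mixed Poisson number of arrivals. Under lam s1 < 1 service wins by a
  margin linear in |\<zeta>|, while v \<zeta> \<le> sqrt a |\<zeta>|; this gives the drift -\<alpha> for large |\<zeta>| and
  a bounded drift otherwise.\<close>

definition fwd_dist :: "real \<Rightarrow> real \<Rightarrow> real \<Rightarrow> real" where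
  "fwd_dist l x u = (if x \<le> u then u - x else u - x + l)"

definition kern :: "real \<Rightarrow> real \<Rightarrow> real \<Rightarrow> real \<Rightarrow> real" where
  "kern l a x y = max 0 (a - circ_dist l x y)"

lemma fwd_dist_bounds:
  "0 \<le> x \<Longrightarrow> x < l \<Longrightarrow> 0 \<le> u \<Longrightarrow> u < l \<Longrightarrow> 0 \<le> fwd_dist l x u \<and> fwd_dist l x u < l"
  unfolding fwd_dist_def by auto

lemma fwd_dist_pos:
  "0 \<le> x \<Longrightarrow> x < l \<Longrightarrow> 0 \<le> u \<Longrightarrow> u < l \<Longrightarrow> x \<noteq> u \<Longrightarrow> 0 < fwd_dist l x u"
  unfolding fwd_dist_def by auto

lemma circ_dist_eq_min_fwd_dist:
  assumes "0 \<le> x" "x < l" "0 \<le> u" "u < l"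
  shows "circ_dist l x u = min (fwd_dist l x u) (fwd_dist l u x)"
  using assms unfolding circ_dist_def fwd_dist_def by (auto simp: abs_if min_def)

lemma circ_dist_le_fwd_dist:
  "0 \<le> x \<Longrightarrow> x < l \<Longrightarrow> 0 \<le> u \<Longrightarrow> u < l \<Longrightarrow> circ_dist l x u \<le> fwd_dist l x u"
  using circ_dist_eq_min_fwd_dist by force

lemma circ_dist_commute: "circ_dist l x u = circ_dist l u x"
  unfolding circ_dist_def by (simp add: abs_minus_commute)

lemma circ_dist_nonneg:
  "0 \<le> x \<Longrightarrow> x < l \<Longrightarrow> 0 \<le> u \<Longrightarrow> u < l \<Longrightarrow> 0 \<le> circ_dist l x u"
  unfolding circ_dist_def by (auto simp: abs_if)

lemma circ_dist_triangle:
  assumes "0 \<le> x" "x < l" "0 \<le> u" "u < l" "0 \<le> z" "z < l"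
  shows "circ_dist l x z \<le> circ_dist l x u + circ_dist l u z"
  using assms unfolding circ_dist_def by (auto simp: abs_if min_def)

lemma fwd_dist_not_both_first:
  assumes "0 \<le> w1" "w1 < l" "0 \<le> w2" "w2 < l" "0 \<le> u" "u < l" "w1 \<noteq> w2"
    "fwd_dist l w1 u < fwd_dist l w1 w2" "fwd_dist l w2 u < fwd_dist l w2 w1"
  shows False
  using assms unfolding fwd_dist_def by (auto split: if_splits)

lemma fwd_dist_passed_point:
  assumes "0 \<le> w" "w < l" "0 \<le> w2" "w2 < l" "0 \<le> u" "u < l" "w \<noteq> w2"
    "fwd_dist l w w2 \<le> fwd_dist l w u"
  shows "fwd_dist l w2 u < fwd_dist l w u"
  using assms unfolding fwd_dist_def by (auto split: if_splits)

text \<open>An arc of length g from w to w' that contains no other point (w' = w and g = l when w is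
  the only point): points less than halfway along it are closer to w, points near its end are
  closer to w', and its initial and final pieces of length h \<le> g / 2 are disjoint.\<close>

lemma circ_dist_lt_near_arc_start:
  assumes "0 \<le> w" "w < l" "0 \<le> u" "u < l" "0 \<le> x" "x < l" "x \<noteq> w"
    "0 < fwd_dist l w u" "2 * fwd_dist l w u < fwd_dist l w x"
  shows "circ_dist l w u < circ_dist l x u"
proof -
  have "fwd_dist l w u < fwd_dist l x u" "fwd_dist l w u < fwd_dist l u x"
    using assms unfolding fwd_dist_def by (auto split: if_splits)
  then show ?thesis using assms circ_dist_eq_min_fwd_dist[of w l u] circ_dist_eq_min_fwd_dist[of x l u] by (simp add: min_less_iff_disj)
qed

lemma fwd_dist_near_arc_end:
  assumes "0 \<le> w" "w < l" "0 \<le> u" "u < l" "0 \<le> w'" "w' < l"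
    "(w' = w \<and> g = l) \<or> (w' \<noteq> w \<and> fwd_dist l w w' = g)"
    "2 * h \<le> g" "g \<le> l" "l - h < fwd_dist l w' u"
  shows "fwd_dist l u w' < h" "0 < fwd_dist l u w'" "fwd_dist l w u < g"
  using assms unfolding fwd_dist_def by (auto split: if_splits)

lemma circ_dist_lt_near_arc_end:
  assumes "0 \<le> w" "w < l" "0 \<le> u" "u < l" "0 \<le> x" "x < l" "0 \<le> w'" "w' < l"
    "(w' = w \<and> g = l) \<or> (w' \<noteq> w \<and> fwd_dist l w w' = g)"
    "2 * h \<le> g" "g \<le> l" "l - h < fwd_dist l w' u" "x \<noteq> w'" "x = w \<or> g \<le> fwd_dist l w x"
  shows "circ_dist l w' u < circ_dist l x u"
proof -
  have "fwd_dist l u w' < fwd_dist l x u" "fwd_dist l u w' < fwd_dist l u x"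
    using assms unfolding fwd_dist_def by (auto split: if_splits)
  then show ?thesis using assms circ_dist_eq_min_fwd_dist[of w' l u] circ_dist_eq_min_fwd_dist[of x l u] by (simp add: min_less_iff_disj)
qed

lemma arc_start_end_disjoint:
  assumes "0 \<le> w" "w < l" "0 \<le> u" "u < l" "0 \<le> w'" "w' < l"
    "(w' = w \<and> g = l) \<or> (w' \<noteq> w \<and> fwd_dist l w w' = g)"
    "2 * h \<le> g" "g \<le> l" "l - h < fwd_dist l w' u" "fwd_dist l w u < h"
  shows False
  using assms unfolding fwd_dist_def by (auto split: if_splits)

lemma circ_dist_through_arc_end:
  assumes "0 \<le> w" "w < l" "0 \<le> u" "u < l" "0 \<le> z" "z < l" "0 \<le> w'" "w' < l"
    and "fwd_dist l w u < g" "g \<le> l"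
    and "z = w \<or> g \<le> fwd_dist l w z"
    and "(w' = w \<and> g = l) \<or> (w' \<noteq> w \<and> fwd_dist l w w' = g)"
  shows "min (fwd_dist l w u + circ_dist l w z) ((g - fwd_dist l w u) + circ_dist l w' z) \<le> circ_dist l u z"
  using assms unfolding circ_dist_def fwd_dist_def by (auto simp: abs_if min_def split: if_splits)

lemma kern_nonneg: "0 \<le> kern l a x y"
  unfolding kern_def by simp

lemma kern_le:
  "0 \<le> a \<Longrightarrow> 0 \<le> x \<Longrightarrow> x < l \<Longrightarrow> 0 \<le> y \<Longrightarrow> y < l \<Longrightarrow> kern l a x y \<le> a"
  using circ_dist_nonneg[of x l y] unfolding kern_def by auto

lemma kern_commute: "kern l a x y = kern l a y x"
  unfolding kern_def using circ_dist_commute by metis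

lemma kern_self: "0 \<le> l \<Longrightarrow> kern l a x x = max 0 a"
  unfolding kern_def circ_dist_def by simp

lemma kern_lipschitz:
  assumes "0 \<le> w" "w < l" "0 \<le> z" "z < l" "0 \<le> w'" "w' < l"
  shows "\<bar>kern l a w z - kern l a w' z\<bar> \<le> circ_dist l w w'"
proof -
  have "circ_dist l w z \<le> circ_dist l w w' + circ_dist l w' z"
    by (rule circ_dist_triangle) (use assms in auto)
  moreover have "circ_dist l w' z \<le> circ_dist l w' w + circ_dist l w z"
    by (rule circ_dist_triangle) (use assms in auto)
  ultimately show ?thesis unfolding kern_def using circ_dist_commute[of l w w'] by (auto simp: max_def)
qed

lemma kern_through_arc_end:
  assumes "0 \<le> w" "w < l" "0 \<le> u" "u < l" "0 \<le> z" "z < l" "0 \<le> w'" "w' < l"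
    and "fwd_dist l w u < g" "g \<le> l"
    and "z = w \<or> g \<le> fwd_dist l w z"
    and "(w' = w \<and> g = l) \<or> (w' \<noteq> w \<and> fwd_dist l w w' = g)"
  shows "kern l a u z \<le> max (max 0 (kern l a w z - fwd_dist l w u)) (max 0 (kern l a w' z - (g - fwd_dist l w u)))"
  using circ_dist_through_arc_end[OF assms] unfolding kern_def by (auto simp: min_def max_def split: if_splits)

definition chord :: "real \<Rightarrow> real \<Rightarrow> real \<Rightarrow> real \<Rightarrow> real" where
  "chord g K1 K2 t = K1 + (K2 - K1) * t / g"

definition hats :: "real \<Rightarrow> real \<Rightarrow> real \<Rightarrow> real \<Rightarrow> real \<Rightarrow> real" where
  "hats a g K1 K2 t = K1 * max 0 (1 - t / a) + K2 * max 0 (1 - (g - t) / a)"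

lemma chord_nonneg:
  assumes "0 \<le> K1" "0 \<le> K2" "0 \<le> t" "t \<le> g" "0 < g"
  shows "0 \<le> chord g K1 K2 t"
proof -
  have "chord g K1 K2 t = (K1 * (g - t) + K2 * t) / g"
    using assms(5) by (simp add: chord_def field_simps)
  then show ?thesis using assms by simp
qed

lemma max_tents_le_chord:
  fixes K1 K2 g t :: real
  assumes "0 \<le> K1" "0 \<le> K2" "\<bar>K1 - K2\<bar> \<le> g" "0 \<le> t" "t \<le> g" "0 < g"
  shows "max (max 0 (K1 - t)) (max 0 (K2 - (g - t))) \<le> chord g K1 K2 t"
proof -
  have eq: "chord g K1 K2 t = (K1 * (g - t) + K2 * t) / g"
    using assms(6) by (simp add: chord_def field_simps)
  have "- t * g \<le> (K2 - K1) * t"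
    using mult_right_mono[of "- g" "K2 - K1" t] assms(3,4) by (simp add: mult.commute)
  then have "(K1 - t) * g \<le> K1 * (g - t) + K2 * t" by (simp add: algebra_simps)
  then have c1: "K1 - t \<le> chord g K1 K2 t" unfolding eq using assms(6) by (simp add: le_divide_eq)
  have "(K2 - K1) * (g - t) \<le> g * (g - t)"
    using mult_right_mono[of "K2 - K1" g "g - t"] assms(3,5) by simp
  then have "(K2 - (g - t)) * g \<le> K1 * (g - t) + K2 * t" by (simp add: algebra_simps)
  then have c2: "K2 - (g - t) \<le> chord g K1 K2 t" unfolding eq using assms(6) by (simp add: le_divide_eq)
  show ?thesis using chord_nonneg[OF assms(1,2,4,5,6)] c1 c2 by (metis max.bounded_iff)
qed

lemma tent_le_hat:
  fixes K a t :: real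
  assumes "0 \<le> K" "K \<le> a" "0 \<le> t" "0 < a"
  shows "max 0 (K - t) \<le> K * max 0 (1 - t / a)"
proof (cases "t \<le> a")
  case True
  have "K * t \<le> a * t" using assms by (intro mult_right_mono) auto
  then have "K * t / a \<le> t" using assms by (simp add: divide_le_eq mult.commute)
  then have "K - t \<le> K * (1 - t / a)" by (simp add: algebra_simps)
  then show ?thesis using True assms by (auto simp: max_def)
qed (use assms in \<open>auto simp: max_def\<close>)

lemma max_tents_le_hats:
  assumes "0 \<le> K1" "K1 \<le> a" "0 \<le> K2" "K2 \<le> a" "0 \<le> t" "t \<le> g" "0 < a"
  shows "max (max 0 (K1 - t)) (max 0 (K2 - (g - t))) \<le> hats a g K1 K2 t"
proof -
  have "max 0 (K1 - t) \<le> K1 * max 0 (1 - t / a)" "max 0 (K2 - (g - t)) \<le> K2 * max 0 (1 - (g - t) / a)"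
    using tent_le_hat assms by simp_all
  moreover have "0 \<le> K1 * max 0 (1 - t / a)" "0 \<le> K2 * max 0 (1 - (g - t) / a)"
    using assms by simp_all
  ultimately show ?thesis unfolding hats_def by (simp only: max.bounded_iff) linarith
qed

lemma nn_integral_affine:
  fixes lo hi c d :: real
  assumes "lo \<le> hi" and "\<And>t. t \<in> {lo..hi} \<Longrightarrow> 0 \<le> c + d * t"
  shows "(\<integral>\<^sup>+t. ennreal (c + d * t) * indicator {lo..hi} t \<partial>lborel)
       = ennreal (c * (hi - lo) + d * ((hi\<^sup>2 - lo\<^sup>2) / 2))"
proof (rule nn_integral_has_integral_lebesgue'[OF assms(2)])
  have "((\<lambda>t. c + t * d) has_integral (c * (hi - lo) + (hi\<^sup>2 - lo\<^sup>2) / 2 * d)) {lo..hi}"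
    using has_integral_const_real[of c lo hi] assms(1)
      has_integral_mult_left[OF ident_has_integral[OF assms(1)], of d]
    by (intro has_integral_add) (simp_all add: mult.commute)
  then show "((\<lambda>t. c + d * t) has_integral (c * (hi - lo) + d * ((hi\<^sup>2 - lo\<^sup>2) / 2))) {lo..hi}"
    by (simp add: mult.commute)
qed

lemma nn_integral_chord_le:
  assumes "0 \<le> K1" "0 \<le> K2" "0 < g"
  shows "(\<integral>\<^sup>+t. indicator {0..<g} t * ennreal (chord g K1 K2 t) \<partial>lborel) \<le> ennreal (g / 2 * (K1 + K2))"
proof -
  have "(\<integral>\<^sup>+t. indicator {0..<g} t * ennreal (chord g K1 K2 t) \<partial>lborel)
      \<le> (\<integral>\<^sup>+t. ennreal (K1 + ((K2 - K1) / g) * t) * indicator {0..g} t \<partial>lborel)"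
    by (intro nn_integral_mono) (auto simp: indicator_def chord_def)
  also have "\<dots> = ennreal (K1 * (g - 0) + ((K2 - K1) / g) * ((g\<^sup>2 - 0\<^sup>2) / 2))"
    using chord_nonneg[OF assms(1,2) _ _ assms(3)] assms(3)
    by (intro nn_integral_affine) (auto simp: chord_def)
  also have "K1 * (g - 0) + ((K2 - K1) / g) * ((g\<^sup>2 - 0\<^sup>2) / 2) = g / 2 * (K1 + K2)"
    using assms(3) by (simp add: power2_eq_square field_simps)
  finally show ?thesis .
qed

lemma nn_integral_hats_le:
  assumes "0 \<le> K1" "0 \<le> K2" "0 < a" "a \<le> g"
  shows "(\<integral>\<^sup>+t. indicator {0..<g} t * ennreal (hats a g K1 K2 t) \<partial>lborel) \<le> ennreal (a / 2 * (K1 + K2))"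
proof -
  have "(\<integral>\<^sup>+t. indicator {0..<g} t * ennreal (hats a g K1 K2 t) \<partial>lborel)
      \<le> (\<integral>\<^sup>+t. ennreal (K1 + (- K1 / a) * t) * indicator {0..a} t
            + ennreal (K2 * (1 - g / a) + (K2 / a) * t) * indicator {g - a..g} t \<partial>lborel)"
  proof (intro nn_integral_mono)
    fix t
    have "K1 * max 0 (1 - t / a) = (if t \<le> a then K1 + (- K1 / a) * t else 0)"
      "K2 * max 0 (1 - (g - t) / a) = (if g - a \<le> t then K2 * (1 - g / a) + (K2 / a) * t else 0)"
      using assms by (auto simp: max_def field_simps)
    then show "indicator {0..<g} t * ennreal (hats a g K1 K2 t)
        \<le> ennreal (K1 + (- K1 / a) * t) * indicator {0..a} t
            + ennreal (K2 * (1 - g / a) + (K2 / a) * t) * indicator {g - a..g} t"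
      using assms mult_nonneg_nonneg[of K1 "max 0 (1 - t / a)"]
        mult_nonneg_nonneg[of K2 "max 0 (1 - (g - t) / a)"]
      by (auto simp: hats_def indicator_def ennreal_plus[symmetric] simp del: ennreal_plus)
  qed
  also have "\<dots> = (\<integral>\<^sup>+t. ennreal (K1 + (- K1 / a) * t) * indicator {0..a} t \<partial>lborel)
              + (\<integral>\<^sup>+t. ennreal (K2 * (1 - g / a) + (K2 / a) * t) * indicator {g - a..g} t \<partial>lborel)"
    by (rule nn_integral_add) auto
  also have "(\<integral>\<^sup>+t. ennreal (K1 + (- K1 / a) * t) * indicator {0..a} t \<partial>lborel) = ennreal (a / 2 * K1)"
  proof -
    have "0 \<le> K1 + - K1 / a * t" if "t \<in> {0..a}" for t
      using mult_left_mono[of t a K1] that assms by (simp add: field_simps)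
    then have "(\<integral>\<^sup>+t. ennreal (K1 + (- K1 / a) * t) * indicator {0..a} t \<partial>lborel)
        = ennreal (K1 * (a - 0) + (- K1 / a) * ((a\<^sup>2 - 0\<^sup>2) / 2))"
      using assms by (intro nn_integral_affine) auto
    then show ?thesis using assms by (simp add: power2_eq_square field_simps)
  qed
  also have "(\<integral>\<^sup>+t. ennreal (K2 * (1 - g / a) + (K2 / a) * t) * indicator {g - a..g} t \<partial>lborel)
      = ennreal (a / 2 * K2)"
  proof -
    have "K2 * (1 - g / a) + K2 / a * t = K2 * (a - g + t) / a" for t
      using assms by (simp add: field_simps)
    then have "0 \<le> K2 * (1 - g / a) + K2 / a * t" if "t \<in> {g - a..g}" for t
      using that assms by simp
    then have "(\<integral>\<^sup>+t. ennreal (K2 * (1 - g / a) + (K2 / a) * t) * indicator {g - a..g} t \<partial>lborel)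
        = ennreal (K2 * (1 - g / a) * (g - (g - a)) + (K2 / a) * ((g\<^sup>2 - (g - a)\<^sup>2) / 2))"
      using assms by (intro nn_integral_affine) auto
    then show ?thesis using assms by (simp add: power2_eq_square field_simps)
  qed
  also have "ennreal (a / 2 * K1) + ennreal (a / 2 * K2) = ennreal (a / 2 * (K1 + K2))"
    using assms by (simp add: ennreal_plus[symmetric] distrib_left del: ennreal_plus)
  finally show ?thesis .
qed

lemma fwd_dist_measurable[measurable]: "fwd_dist l w \<in> borel_measurable borel"
  unfolding fwd_dist_def by measurable

lemma circ_dist_measurable[measurable]: "(\<lambda>u. circ_dist l x u) \<in> borel_measurable borel"
  unfolding circ_dist_def by measurable

lemma circ_dist_measurable'[measurable]: "(\<lambda>u. circ_dist l u x) \<in> borel_measurable borel"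
  unfolding circ_dist_def by measurable

lemma kern_measurable[measurable]: "(\<lambda>u. kern l a u z) \<in> borel_measurable borel"
  unfolding kern_def by measurable

lemma nn_integral_rotate:
  fixes f :: "real \<Rightarrow> ennreal"
  assumes "0 \<le> x" "x < l" and [measurable]: "f \<in> borel_measurable borel"
  shows "(\<integral>\<^sup>+u. indicator {0..<l} u * f (fwd_dist l x u) \<partial>lborel) = (\<integral>\<^sup>+t. indicator {0..<l} t * f t \<partial>lborel)"
proof -
  have shift: "(\<integral>\<^sup>+u. h u \<partial>lborel) = (\<integral>\<^sup>+t. h (c + t) \<partial>lborel)"
    if [measurable]: "h \<in> borel_measurable borel" for h :: "real \<Rightarrow> ennreal" and c
    using nn_integral_real_affine[OF that, of 1 c] by simp
  have "(\<integral>\<^sup>+u. indicator {0..<l} u * f (fwd_dist l x u) \<partial>lborel) =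
     (\<integral>\<^sup>+u. indicator {x..<l} u * f (u - x) + indicator {0..<x} u * f (u - x + l) \<partial>lborel)"
    using assms(1,2) by (intro nn_integral_cong) (auto simp: fwd_dist_def indicator_def)
  also have "\<dots> = (\<integral>\<^sup>+u. indicator {x..<l} u * f (u - x) \<partial>lborel)
      + (\<integral>\<^sup>+u. indicator {0..<x} u * f (u - x + l) \<partial>lborel)"
    by (rule nn_integral_add) auto
  also have "(\<integral>\<^sup>+u. indicator {x..<l} u * f (u - x) \<partial>lborel) = (\<integral>\<^sup>+t. indicator {0..<l-x} t * f t \<partial>lborel)"
    by (subst shift[of _ x]) (auto intro!: nn_integral_cong simp: indicator_def)
  also have "(\<integral>\<^sup>+u. indicator {0..<x} u * f (u - x + l) \<partial>lborel) = (\<integral>\<^sup>+t. indicator {l-x..<l} t * f t \<partial>lborel)"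
    by (subst shift[of _ "x - l"]) (auto intro!: nn_integral_cong simp: indicator_def)
  also have "(\<integral>\<^sup>+t. indicator {0..<l-x} t * f t \<partial>lborel) + (\<integral>\<^sup>+t. indicator {l-x..<l} t * f t \<partial>lborel)
      = (\<integral>\<^sup>+t. indicator {0..<l-x} t * f t + indicator {l-x..<l} t * f t \<partial>lborel)"
    by (rule nn_integral_add[symmetric]) auto
  also have "\<dots> = (\<integral>\<^sup>+t. indicator {0..<l} t * f t \<partial>lborel)"
    using assms(1,2) by (intro nn_integral_cong) (auto simp: indicator_def)
  finally show ?thesis .
qed

lemma emeasure_fwd_dist_preimage:
  assumes "0 \<le> x" "x < l" and [measurable]: "B \<in> sets borel"
  shows "emeasure lborel {u \<in> {0..<l}. fwd_dist l x u \<in> B} = emeasure lborel ({0..<l} \<inter> B)"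
proof -
  have [measurable]: "{u \<in> {0..<l}. fwd_dist l x u \<in> B} \<in> sets borel" by measurable
  have "emeasure lborel {u \<in> {0..<l}. fwd_dist l x u \<in> B}
      = (\<integral>\<^sup>+u. indicator {u \<in> {0..<l}. fwd_dist l x u \<in> B} u \<partial>lborel)"
    by (simp add: nn_integral_indicator)
  also have "\<dots> = (\<integral>\<^sup>+u. indicator {0..<l} u * indicator B (fwd_dist l x u) \<partial>lborel)"
    by (intro nn_integral_cong) (simp add: indicator_def)
  also have "\<dots> = (\<integral>\<^sup>+t. indicator {0..<l} t * indicator B t \<partial>lborel)"
    using assms by (intro nn_integral_rotate) auto
  also have "\<dots> = (\<integral>\<^sup>+t. indicator ({0..<l} \<inter> B) t \<partial>lborel)"
    by (intro nn_integral_cong) (simp add: indicator_def)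
  also have "\<dots> = emeasure lborel ({0..<l} \<inter> B)"
    by (simp add: nn_integral_indicator)
  finally show ?thesis .
qed

definition service_region :: "real \<Rightarrow> real \<Rightarrow> real multiset \<Rightarrow> real \<Rightarrow> real set" where
  "service_region l r \<eta> x = rball l r x \<inter> voronoi l \<eta> x"

lemma service_region_sub: "service_region l r \<eta> x \<subseteq> {0..<l}"
  by (auto simp: service_region_def rball_def circ_def)

lemma sets_service_region[measurable]: "service_region l r \<eta> x \<in> sets borel"
proof -
  have "voronoi l \<eta> x = {0..<l} \<inter> (\<Inter>x'\<in>set_mset \<eta> - {x}. {y. circ_dist l x y < circ_dist l x' y})"
    by (auto simp: voronoi_def circ_def)
  moreover have "rball l r x = {0..<l} \<inter> {y. circ_dist l x y < r}"
    by (auto simp: rball_def circ_def)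
  moreover have "{y. circ_dist l x y < circ_dist l x' y} \<in> sets borel" for x'
    by measurable
  moreover have "{y. circ_dist l x y < r} \<in> sets borel"
    by measurable
  ultimately show ?thesis unfolding service_region_def by auto
qed

lemma service_region_disjoint:
  "x \<in># \<eta> \<Longrightarrow> y \<in># \<eta> \<Longrightarrow> x \<noteq> y \<Longrightarrow> service_region l r \<eta> x \<inter> service_region l r \<eta> y = {}"
  by (fastforce simp: service_region_def voronoi_def)

locale circle_config =
  fixes l :: real and \<eta> :: "real multiset"
  assumes atoms_in_circle: "set_mset \<eta> \<subseteq> {0..<l}"
begin

lemma atom_bounds: "x \<in># \<eta> \<Longrightarrow> 0 \<le> x \<and> x < l"
  using atoms_in_circle by auto

definition gap :: "real \<Rightarrow> real" where
  "gap x = (if set_mset \<eta> - {x} = {} then l else Min (fwd_dist l x ` (set_mset \<eta> - {x})))"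

definition next_atom :: "real \<Rightarrow> real" where
  "next_atom x = (if set_mset \<eta> - {x} = {} then x
     else (SOME w. w \<in> set_mset \<eta> - {x} \<and> fwd_dist l x w = gap x))"

definition gap_arc :: "real \<Rightarrow> real set" where
  "gap_arc w = {u \<in> {0..<l}. fwd_dist l w u < gap w}"

lemma gap_le_fwd_dist: "w \<in># \<eta> \<Longrightarrow> w \<noteq> x \<Longrightarrow> gap x \<le> fwd_dist l x w"
  by (auto simp: gap_def)

lemma gap_pos:
  assumes "x \<in># \<eta>" shows "0 < gap x"
proof -
  have "0 < fwd_dist l x w" if "w \<in> set_mset \<eta> - {x}" for w
    using that assms atom_bounds by (auto intro!: fwd_dist_pos)
  moreover have "0 < l" using assms atom_bounds by force
  ultimately show ?thesis by (simp add: gap_def)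
qed

lemma gap_le:
  assumes "x \<in># \<eta>" shows "gap x \<le> l"
proof (cases "set_mset \<eta> - {x} = {}")
  case False
  then obtain w where w: "w \<in># \<eta>" "w \<noteq> x" by auto
  then have "gap x \<le> fwd_dist l x w" by (rule gap_le_fwd_dist)
  also have "\<dots> < l" using fwd_dist_bounds[of x l w] atom_bounds assms w(1) by blast
  finally show ?thesis by simp
qed (simp add: gap_def)

lemma next_atom:
  assumes "x \<in># \<eta>"
  shows "next_atom x \<in># \<eta>"
    and "(next_atom x = x \<and> gap x = l) \<or> (next_atom x \<noteq> x \<and> fwd_dist l x (next_atom x) = gap x)"
proof -
  have "next_atom x \<in># \<eta> \<and> ((next_atom x = x \<and> gap x = l) \<or> (next_atom x \<noteq> x \<and> fwd_dist l x (next_atom x) = gap x))"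
  proof (cases "set_mset \<eta> - {x} = {}")
    case False
    have "gap x \<in> fwd_dist l x ` (set_mset \<eta> - {x})"
      using False by (simp add: gap_def)
    then have "\<exists>w. w \<in> set_mset \<eta> - {x} \<and> fwd_dist l x w = gap x" by auto
    from someI_ex[OF this] show ?thesis using False by (simp add: next_atom_def)
  qed (use assms in \<open>simp add: gap_def next_atom_def\<close>)
  then show "next_atom x \<in># \<eta>"
    and "(next_atom x = x \<and> gap x = l) \<or> (next_atom x \<noteq> x \<and> fwd_dist l x (next_atom x) = gap x)"
    by auto
qed

lemma gap_arcs_disjoint:
  assumes "w1 \<in># \<eta>" "w2 \<in># \<eta>" "w1 \<noteq> w2"
  shows "gap_arc w1 \<inter> gap_arc w2 = {}"
proof -
  have False if "u \<in> gap_arc w1" "u \<in> gap_arc w2" for u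
  proof -
    have "0 \<le> u" "u < l" "fwd_dist l w1 u < gap w1" "fwd_dist l w2 u < gap w2"
      using that by (auto simp: gap_arc_def)
    moreover have "gap w1 \<le> fwd_dist l w1 w2" "gap w2 \<le> fwd_dist l w2 w1"
      using gap_le_fwd_dist assms by auto
    ultimately show False
      using fwd_dist_not_both_first[of w1 l w2 u] atom_bounds[OF assms(1)] atom_bounds[OF assms(2)] assms(3)
      by linarith
  qed
  then show ?thesis by blast
qed

text \<open>u lies on the arc after the atom w that minimises fwd_dist l w u.\<close>

lemma gap_arcs_cover:
  assumes "\<eta> \<noteq> {#}" "0 \<le> u" "u < l"
  shows "\<exists>w\<in>#\<eta>. u \<in> gap_arc w"
proof -
  have "(\<lambda>w. fwd_dist l w u) ` set_mset \<eta> \<noteq> {}" using assms(1) by simp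
  from Min_in[OF _ this] obtain w where w: "w \<in># \<eta>" "fwd_dist l w u = Min ((\<lambda>w. fwd_dist l w u) ` set_mset \<eta>)"
    by auto
  have "fwd_dist l w u < fwd_dist l w w2" if "w2 \<in> set_mset \<eta> - {w}" for w2
  proof (rule ccontr)
    assume "\<not> ?thesis"
    then have "fwd_dist l w2 u < fwd_dist l w u"
      using fwd_dist_passed_point[of w l w2 u] that atom_bounds[of w] atom_bounds[of w2] w(1) assms(2,3)
      by auto
    moreover have "fwd_dist l w u \<le> fwd_dist l w2 u" using w that by simp
    ultimately show False by simp
  qed
  then have "fwd_dist l w u < gap w"
    using fwd_dist_bounds[of w l u] atom_bounds[OF w(1)] assms(2,3) by (auto simp: gap_def)
  then show ?thesis using w(1) assms(2,3) by (auto simp: gap_arc_def)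
qed

lemma sum_indicator_gap_arc:
  assumes "\<eta> \<noteq> {#}"
  shows "(\<Sum>w\<in>set_mset \<eta>. indicator (gap_arc w) u) = (indicator {0..<l} u :: ennreal)"
proof (cases "u \<in> {0..<l}")
  case True
  then obtain w where w: "w \<in># \<eta>" "u \<in> gap_arc w" using gap_arcs_cover[OF assms] by auto
  have "(\<Sum>w'\<in>set_mset \<eta>. indicator (gap_arc w') u :: ennreal) = (\<Sum>w'\<in>set_mset \<eta>. if w' = w then 1 else 0)"
  proof (rule sum.cong)
    fix w' assume "w' \<in> set_mset \<eta>"
    then show "indicator (gap_arc w') u = (if w' = w then 1 else (0::ennreal))"
      using gap_arcs_disjoint[of w' w] w by (auto simp: indicator_def)
  qed simp
  also have "\<dots> = 1" using w(1) by (simp add: sum.delta)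
  finally show ?thesis using True by simp
next
  case False
  then have "indicator (gap_arc w) u = (0::ennreal)" for w by (auto simp: gap_arc_def indicator_def)
  then show ?thesis using False by simp
qed

definition piece_len :: "real \<Rightarrow> real \<Rightarrow> real" where
  "piece_len r w = min r (gap w / 2)"

definition right_piece :: "real \<Rightarrow> real \<Rightarrow> real set" where
  "right_piece r w = {u \<in> {0..<l}. 0 < fwd_dist l w u \<and> fwd_dist l w u < piece_len r w}"

definition left_piece :: "real \<Rightarrow> real \<Rightarrow> real set" where
  "left_piece r w = {u \<in> {0..<l}. l - piece_len r w < fwd_dist l (next_atom w) u}"

lemma sets_gap_arc[measurable]: "gap_arc w \<in> sets borel"
  unfolding gap_arc_def by measurable

lemma sets_right_piece[measurable]: "right_piece r w \<in> sets borel"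
  unfolding right_piece_def by measurable

lemma sets_left_piece[measurable]: "left_piece r w \<in> sets borel"
  unfolding left_piece_def by measurable

lemma gap_arc_shape:
  assumes "w \<in># \<eta>"
  shows "(next_atom w = w \<and> gap w = l) \<or> (next_atom w \<noteq> w \<and> fwd_dist l w (next_atom w) = gap w)"
    and "2 * piece_len r w \<le> gap w" "gap w \<le> l"
  using next_atom(2)[OF assms] gap_le[OF assms] by (auto simp: piece_len_def)

lemma right_piece_sub_service_region:
  assumes w: "w \<in># \<eta>" shows "right_piece r w \<subseteq> service_region l r \<eta> w"
proof
  fix u assume u: "u \<in> right_piece r w"
  have ub: "0 \<le> u" "u < l" and t: "0 < fwd_dist l w u" "fwd_dist l w u < piece_len r w"
    using u by (auto simp: right_piece_def)
  have "circ_dist l w u < circ_dist l x u" if x: "x \<in># \<eta>" "x \<noteq> w" for x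
    using t gap_le_fwd_dist[OF x] atom_bounds[OF w] atom_bounds[OF x(1)] ub x(2)
    by (intro circ_dist_lt_near_arc_start) (auto simp: piece_len_def)
  moreover have "circ_dist l w u < r"
    using circ_dist_le_fwd_dist[of w l u] atom_bounds[OF w] ub t by (auto simp: piece_len_def)
  ultimately show "u \<in> service_region l r \<eta> w"
    using ub by (auto simp: service_region_def rball_def voronoi_def circ_def)
qed

lemma left_piece_fwd_dist:
  assumes w: "w \<in># \<eta>" and u: "u \<in> left_piece r w"
  shows "fwd_dist l u (next_atom w) < piece_len r w" "0 < fwd_dist l u (next_atom w)"
    "fwd_dist l w u < gap w"
proof -
  have "0 \<le> u" "u < l" "l - piece_len r w < fwd_dist l (next_atom w) u"
    using u by (auto simp: left_piece_def)
  with fwd_dist_near_arc_end[of w l u "next_atom w"] gap_arc_shape[OF w] atom_bounds[OF w]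
    atom_bounds[OF next_atom(1)[OF w]]
  show "fwd_dist l u (next_atom w) < piece_len r w" "0 < fwd_dist l u (next_atom w)"
    "fwd_dist l w u < gap w"
    by blast+
qed

lemma left_piece_sub_service_region:
  assumes w: "w \<in># \<eta>" shows "left_piece r w \<subseteq> service_region l r \<eta> (next_atom w)"
proof
  fix u assume u: "u \<in> left_piece r w"
  have ub: "0 \<le> u" "u < l" "l - piece_len r w < fwd_dist l (next_atom w) u"
    using u by (auto simp: left_piece_def)
  have "circ_dist l (next_atom w) u < circ_dist l x u" if x: "x \<in># \<eta>" "x \<noteq> next_atom w" for x
  proof -
    have "x = w \<or> gap w \<le> fwd_dist l w x" using gap_le_fwd_dist[OF x(1)] by auto
    with circ_dist_lt_near_arc_end[of w l u x "next_atom w"] gap_arc_shape[OF w] atom_bounds[OF w]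
      atom_bounds[OF next_atom(1)[OF w]] atom_bounds[OF x(1)] ub x(2)
    show ?thesis by blast
  qed
  moreover have "circ_dist l (next_atom w) u < r"
    using circ_dist_eq_min_fwd_dist[of "next_atom w" l u] atom_bounds[OF next_atom(1)[OF w]] ub
      left_piece_fwd_dist[OF w u] by (auto simp: piece_len_def)
  ultimately show "u \<in> service_region l r \<eta> (next_atom w)"
    using ub by (auto simp: service_region_def rball_def voronoi_def circ_def)
qed

lemma pieces_sub_gap_arc:
  assumes w: "w \<in># \<eta>" shows "right_piece r w \<union> left_piece r w \<subseteq> gap_arc w"
proof -
  have "right_piece r w \<subseteq> gap_arc w"
    using gap_pos[OF w] by (auto simp: right_piece_def piece_len_def gap_arc_def)
  moreover have "left_piece r w \<subseteq> gap_arc w"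
    using left_piece_fwd_dist(3)[OF w] by (auto simp: gap_arc_def left_piece_def)
  ultimately show ?thesis by blast
qed

lemma pieces_disjoint:
  assumes w: "w \<in># \<eta>" shows "right_piece r w \<inter> left_piece r w = {}"
proof -
  have False if "u \<in> right_piece r w" "u \<in> left_piece r w" for u
  proof -
    have "0 \<le> u" "u < l" "fwd_dist l w u < piece_len r w" "l - piece_len r w < fwd_dist l (next_atom w) u"
      using that by (auto simp: right_piece_def left_piece_def)
    with arc_start_end_disjoint[of w l u "next_atom w"] gap_arc_shape[OF w] atom_bounds[OF w]
      atom_bounds[OF next_atom(1)[OF w]]
    show False by blast
  qed
  then show ?thesis by blast
qed

lemma piece_len_bounds:
  "w \<in># \<eta> \<Longrightarrow> 0 < r \<Longrightarrow> 0 \<le> piece_len r w \<and> piece_len r w \<le> l / 2"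
  using gap_pos[of w] gap_le[of w] by (auto simp: piece_len_def)

lemma emeasure_right_piece:
  assumes "w \<in># \<eta>" "0 < r" shows "emeasure lborel (right_piece r w) = piece_len r w"
proof -
  have "right_piece r w = {u \<in> {0..<l}. fwd_dist l w u \<in> {0<..<piece_len r w}}"
    by (auto simp: right_piece_def)
  then have "emeasure lborel (right_piece r w) = emeasure lborel ({0..<l} \<inter> {0<..<piece_len r w})"
    using emeasure_fwd_dist_preimage[of w l "{0<..<piece_len r w}"] atom_bounds[OF assms(1)] by simp
  also have "{0..<l} \<inter> {0<..<piece_len r w} = {0<..<piece_len r w}"
    using piece_len_bounds[OF assms] by auto
  finally show ?thesis using piece_len_bounds[OF assms] by simp
qed

lemma emeasure_left_piece:
  assumes "w \<in># \<eta>" "0 < r" shows "emeasure lborel (left_piece r w) = piece_len r w"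
proof -
  have "left_piece r w = {u \<in> {0..<l}. fwd_dist l (next_atom w) u \<in> {l - piece_len r w<..}}"
    by (auto simp: left_piece_def)
  then have "emeasure lborel (left_piece r w) = emeasure lborel ({0..<l} \<inter> {l - piece_len r w<..})"
    using emeasure_fwd_dist_preimage[of "next_atom w" l "{l - piece_len r w<..}"]
      atom_bounds[OF next_atom(1)[OF assms(1)]] by simp
  also have "{0..<l} \<inter> {l - piece_len r w<..} = {l - piece_len r w<..<l}"
    using piece_len_bounds[OF assms] by auto
  finally show ?thesis using piece_len_bounds[OF assms] by simp
qed


lemma nn_integral_gap_arc_le:
  assumes w: "w \<in># \<eta>" and [measurable]: "P \<in> borel_measurable borel"
    and f: "\<And>u. u \<in> gap_arc w \<Longrightarrow> f u \<le> P (fwd_dist l w u)"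
  shows "(\<integral>\<^sup>+u. indicator (gap_arc w) u * ennreal (f u) \<partial>lborel)
      \<le> (\<integral>\<^sup>+t. indicator {0..<gap w} t * ennreal (P t) \<partial>lborel)"
proof -
  have "indicator (gap_arc w) u * ennreal (f u)
      \<le> indicator {0..<l} u * (indicator {0..<gap w} (fwd_dist l w u) * ennreal (P (fwd_dist l w u)))" for u
    using f[of u] fwd_dist_bounds[of w l u] atom_bounds[OF w]
    by (cases "u \<in> gap_arc w") (auto simp: gap_arc_def intro!: ennreal_leI)
  then have "(\<integral>\<^sup>+u. indicator (gap_arc w) u * ennreal (f u) \<partial>lborel)
      \<le> (\<integral>\<^sup>+u. indicator {0..<l} u * (indicator {0..<gap w} (fwd_dist l w u) * ennreal (P (fwd_dist l w u))) \<partial>lborel)"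
    by (rule nn_integral_mono)
  also have "\<dots> = (\<integral>\<^sup>+t. indicator {0..<l} t * (indicator {0..<gap w} t * ennreal (P t)) \<partial>lborel)"
    using atom_bounds[OF w] by (intro nn_integral_rotate) auto
  also have "\<dots> = (\<integral>\<^sup>+t. indicator {0..<gap w} t * ennreal (P t) \<partial>lborel)"
    using gap_le[OF w] by (intro nn_integral_cong) (auto simp: indicator_def)
  finally show ?thesis .
qed

lemma kern_on_gap_arc_le:
  assumes w: "w \<in># \<eta>" and z: "z \<in># \<eta>" and a: "0 < a" "a \<le> 2 * r"
  shows "(\<integral>\<^sup>+u. indicator (gap_arc w) u * ennreal (kern l a u z) \<partial>lborel)
           \<le> ennreal (piece_len r w * (kern l a w z + kern l a (next_atom w) z))"
proof -
  define g where "g = gap w"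
  define K1 where "K1 = kern l a w z"
  define K2 where "K2 = kern l a (next_atom w) z"
  have w': "next_atom w \<in># \<eta>" by (rule next_atom(1)[OF w])
  have st: "(next_atom w = w \<and> g = l) \<or> (next_atom w \<noteq> w \<and> fwd_dist l w (next_atom w) = g)"
    using next_atom(2)[OF w] by (simp add: g_def)
  have g: "0 < g" "g \<le> l" using gap_pos[OF w] gap_le[OF w] by (auto simp: g_def)
  have zc: "z = w \<or> g \<le> fwd_dist l w z" using gap_le_fwd_dist[OF z] by (auto simp: g_def)
  note bounds = atom_bounds[OF w] atom_bounds[OF w'] atom_bounds[OF z]
  have K: "0 \<le> K1" "K1 \<le> a" "0 \<le> K2" "K2 \<le> a"
    using kern_nonneg kern_le bounds a by (auto simp: K1_def K2_def)
  have "\<bar>K1 - K2\<bar> \<le> circ_dist l w (next_atom w)"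
    unfolding K1_def K2_def by (rule kern_lipschitz) (use bounds in auto)
  also have "\<dots> \<le> g"
    using st g circ_dist_le_fwd_dist[of w l "next_atom w"] bounds by (auto simp: circ_dist_def)
  finally have Kg: "\<bar>K1 - K2\<bar> \<le> g" .
  have profile: "(\<integral>\<^sup>+u. indicator (gap_arc w) u * ennreal (kern l a u z) \<partial>lborel)
      \<le> (\<integral>\<^sup>+t. indicator {0..<g} t * ennreal (P t) \<partial>lborel)"
    if [measurable]: "P \<in> borel_measurable borel"
      and P: "\<And>t. 0 \<le> t \<Longrightarrow> t \<le> g \<Longrightarrow> max (max 0 (K1 - t)) (max 0 (K2 - (g - t))) \<le> P t" for P
    unfolding g_def
  proof (rule nn_integral_gap_arc_le[OF w that(1)])
    fix u assume u: "u \<in> gap_arc w"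
    then have "0 \<le> u" "u < l" "fwd_dist l w u < g" by (auto simp: gap_arc_def g_def)
    then have "kern l a u z \<le> max (max 0 (K1 - fwd_dist l w u)) (max 0 (K2 - (g - fwd_dist l w u)))"
      unfolding K1_def K2_def using bounds g zc st by (intro kern_through_arc_end) auto
    also have "\<dots> \<le> P (fwd_dist l w u)"
      using P fwd_dist_bounds[of w l u] bounds \<open>0 \<le> u\<close> \<open>u < l\<close> \<open>fwd_dist l w u < g\<close> by auto
    finally show "kern l a u z \<le> P (fwd_dist l w u)" .
  qed
  show ?thesis
  proof (cases "g \<le> 2 * r")
    case True
    have "(\<integral>\<^sup>+u. indicator (gap_arc w) u * ennreal (kern l a u z) \<partial>lborel)
        \<le> (\<integral>\<^sup>+t. indicator {0..<g} t * ennreal (chord g K1 K2 t) \<partial>lborel)"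
      using K Kg g by (intro profile max_tents_le_chord) (auto simp: chord_def)
    also have "\<dots> \<le> ennreal (g / 2 * (K1 + K2))"
      using K g by (intro nn_integral_chord_le) auto
    also have "g / 2 = piece_len r w" using True by (simp add: piece_len_def g_def)
    finally show ?thesis by (simp add: K1_def K2_def)
  next
    case False
    have "(\<integral>\<^sup>+u. indicator (gap_arc w) u * ennreal (kern l a u z) \<partial>lborel)
        \<le> (\<integral>\<^sup>+t. indicator {0..<g} t * ennreal (hats a g K1 K2 t) \<partial>lborel)"
      using K a by (intro profile max_tents_le_hats) (auto simp: hats_def)
    also have "\<dots> \<le> ennreal (a / 2 * (K1 + K2))"
      using K a False by (intro nn_integral_hats_le) auto
    also have "\<dots> \<le> ennreal (piece_len r w * (K1 + K2))"
      using False a K by (intro ennreal_leI mult_right_mono) (auto simp: piece_len_def g_def)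
    finally show ?thesis by (simp add: K1_def K2_def)
  qed
qed

lemma service_region_inter_pieces:
  assumes "w \<in># \<eta>" "x \<in># \<eta>"
  shows "service_region l r \<eta> x \<inter> right_piece r w = (if x = w then right_piece r w else {})"
    and "service_region l r \<eta> x \<inter> left_piece r w = (if x = next_atom w then left_piece r w else {})"
  using right_piece_sub_service_region[OF assms(1), of r] left_piece_sub_service_region[OF assms(1), of r]
    service_region_disjoint[OF assms(2,1), of l r]
    service_region_disjoint[OF assms(2) next_atom(1)[OF assms(1)], of l r]
  by auto

lemma piece_len_kern_eq_sum_service_regions:
  assumes w: "w \<in># \<eta>" and "0 < r"
  shows "ennreal (piece_len r w * (kern l a w z + kern l a (next_atom w) z))
    = (\<Sum>x\<in>set_mset \<eta>. emeasure lborel (service_region l r \<eta> x \<inter> (right_piece r w \<union> left_piece r w))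
                          * ennreal (kern l a x z))"
proof -
  have "(\<Sum>x\<in>set_mset \<eta>. emeasure lborel (service_region l r \<eta> x \<inter> (right_piece r w \<union> left_piece r w))
                          * ennreal (kern l a x z))
      = (\<Sum>x\<in>set_mset \<eta>. (if x = w then emeasure lborel (right_piece r w) * ennreal (kern l a x z) else 0)
          + (if x = next_atom w then emeasure lborel (left_piece r w) * ennreal (kern l a x z) else 0))"
  proof (rule sum.cong[OF refl])
    fix x assume x: "x \<in># \<eta>"
    have "emeasure lborel (service_region l r \<eta> x \<inter> (right_piece r w \<union> left_piece r w))
        = emeasure lborel (service_region l r \<eta> x \<inter> right_piece r w)
          + emeasure lborel (service_region l r \<eta> x \<inter> left_piece r w)"
      using pieces_disjoint[OF w] by (subst plus_emeasure) (auto simp: Int_Un_distrib)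
    then show "emeasure lborel (service_region l r \<eta> x \<inter> (right_piece r w \<union> left_piece r w)) * ennreal (kern l a x z)
      = (if x = w then emeasure lborel (right_piece r w) * ennreal (kern l a x z) else 0)
          + (if x = next_atom w then emeasure lborel (left_piece r w) * ennreal (kern l a x z) else 0)"
      by (simp add: service_region_inter_pieces[OF w x] distrib_right)
  qed
  also have "\<dots> = ennreal (piece_len r w) * ennreal (kern l a w z)
      + ennreal (piece_len r w) * ennreal (kern l a (next_atom w) z)"
    using w next_atom(1)[OF w] assms(2)
    by (simp add: sum.distrib sum.delta emeasure_right_piece emeasure_left_piece)
  also have "\<dots> = ennreal (piece_len r w * (kern l a w z + kern l a (next_atom w) z))"
    using piece_len_bounds[OF w assms(2)] kern_nonneg
    by (simp add: ennreal_mult[symmetric] ennreal_plus[symmetric] distrib_left del: ennreal_plus)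
  finally show ?thesis by simp
qed

lemma sum_emeasure_service_region_inter_pieces_le:
  assumes x: "x \<in># \<eta>"
  shows "(\<Sum>w\<in>set_mset \<eta>. emeasure lborel (service_region l r \<eta> x \<inter> (right_piece r w \<union> left_piece r w)))
      \<le> emeasure lborel (service_region l r \<eta> x)"
proof -
  have "disjoint_family_on (\<lambda>w. service_region l r \<eta> x \<inter> (right_piece r w \<union> left_piece r w)) (set_mset \<eta>)"
    using gap_arcs_disjoint pieces_sub_gap_arc unfolding disjoint_family_on_def by blast
  then have "(\<Sum>w\<in>set_mset \<eta>. emeasure lborel (service_region l r \<eta> x \<inter> (right_piece r w \<union> left_piece r w)))
      = emeasure lborel (\<Union>w\<in>set_mset \<eta>. service_region l r \<eta> x \<inter> (right_piece r w \<union> left_piece r w))"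
    by (intro sum_emeasure) auto
  also have "\<dots> \<le> emeasure lborel (service_region l r \<eta> x)"
    by (rule emeasure_mono) auto
  finally show ?thesis .
qed

text \<open>On the arc after each atom w the tent kern l a \<cdot> z lies below the chord through its
  values at the two ends (below two hats if the arc is longer than 2r); the integral of that
  profile is at most what the two pieces of the arc, lying in the service regions of w and of
  next_atom w, carry.\<close>

lemma nn_integral_kern_le_service_regions:
  assumes z: "z \<in># \<eta>" and a: "0 < a" "a \<le> 2 * r"
  shows "(\<integral>\<^sup>+u. indicator {0..<l} u * ennreal (kern l a u z) \<partial>lborel)
          \<le> (\<Sum>x\<in>set_mset \<eta>. emeasure lborel (service_region l r \<eta> x) * ennreal (kern l a x z))"
proof -
  have "\<eta> \<noteq> {#}" using z by auto
  then have "(\<integral>\<^sup>+u. indicator {0..<l} u * ennreal (kern l a u z) \<partial>lborel)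
      = (\<integral>\<^sup>+u. (\<Sum>w\<in>set_mset \<eta>. indicator (gap_arc w) u * ennreal (kern l a u z)) \<partial>lborel)"
    by (intro nn_integral_cong) (simp add: sum_indicator_gap_arc[symmetric] sum_distrib_right)
  also have "\<dots> = (\<Sum>w\<in>set_mset \<eta>. (\<integral>\<^sup>+u. indicator (gap_arc w) u * ennreal (kern l a u z) \<partial>lborel))"
    by (rule nn_integral_sum) measurable
  also have "\<dots> \<le> (\<Sum>w\<in>set_mset \<eta>. ennreal (piece_len r w * (kern l a w z + kern l a (next_atom w) z)))"
    by (intro sum_mono kern_on_gap_arc_le z a) auto
  also have "\<dots> = (\<Sum>w\<in>set_mset \<eta>. \<Sum>x\<in>set_mset \<eta>.
      emeasure lborel (service_region l r \<eta> x \<inter> (right_piece r w \<union> left_piece r w)) * ennreal (kern l a x z))"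
    using a by (intro sum.cong refl piece_len_kern_eq_sum_service_regions) auto
  also have "\<dots> = (\<Sum>x\<in>set_mset \<eta>. (\<Sum>w\<in>set_mset \<eta>.
      emeasure lborel (service_region l r \<eta> x \<inter> (right_piece r w \<union> left_piece r w))) * ennreal (kern l a x z))"
    by (subst sum.swap) (simp add: sum_distrib_right)
  also have "\<dots> \<le> (\<Sum>x\<in>set_mset \<eta>. emeasure lborel (service_region l r \<eta> x) * ennreal (kern l a x z))"
    by (intro sum_mono mult_right_mono sum_emeasure_service_region_inter_pieces_le) auto
  finally show ?thesis .
qed

end

definition kern_sum :: "real \<Rightarrow> real \<Rightarrow> real multiset \<Rightarrow> real \<Rightarrow> real" where
  "kern_sum l a \<zeta> x = sum_mset (image_mset (\<lambda>y. kern l a x y) \<zeta>)"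

definition kern_form :: "real \<Rightarrow> real \<Rightarrow> real multiset \<Rightarrow> real multiset \<Rightarrow> real" where
  "kern_form l a \<eta> \<zeta> = sum_mset (image_mset (kern_sum l a \<zeta>) \<eta>)"

abbreviation kern_quad :: "real \<Rightarrow> real \<Rightarrow> real multiset \<Rightarrow> real" where
  "kern_quad l a \<eta> \<equiv> kern_form l a \<eta> \<eta>"

lemma a_norm_eq_sqrt_kern_quad: "a_norm l a \<eta> = sqrt (kern_quad l a \<eta>)"
  unfolding a_norm_def kern_form_def kern_sum_def kern_def ..

lemma kern_sum_add: "kern_sum l a (\<zeta>1 + \<zeta>2) x = kern_sum l a \<zeta>1 x + kern_sum l a \<zeta>2 x"
  unfolding kern_sum_def by simp

lemma kern_sum_nonneg: "0 \<le> kern_sum l a \<zeta> x"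
  unfolding kern_sum_def by (induction \<zeta>) (auto simp: kern_nonneg)

lemma kern_sum_measurable[measurable]: "kern_sum l a \<zeta> \<in> borel_measurable borel"
proof (induction \<zeta>)
  case (add x \<zeta>)
  have "kern_sum l a (add_mset x \<zeta>) = (\<lambda>u. kern l a u x + kern_sum l a \<zeta> u)"
    by (auto simp: kern_sum_def kern_commute)
  then show ?case using add by simp
qed (simp add: kern_sum_def)

lemma kern_form_add_left: "kern_form l a (\<eta>1 + \<eta>2) \<zeta> = kern_form l a \<eta>1 \<zeta> + kern_form l a \<eta>2 \<zeta>"
  unfolding kern_form_def by simp

lemma kern_form_add_right: "kern_form l a \<eta> (\<zeta>1 + \<zeta>2) = kern_form l a \<eta> \<zeta>1 + kern_form l a \<eta> \<zeta>2"
  unfolding kern_form_def kern_sum_add by (induction \<eta>) auto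

lemma kern_form_singleton_left: "kern_form l a {#x#} \<zeta> = kern_sum l a \<zeta> x"
  unfolding kern_form_def by simp

lemma kern_form_commute: "kern_form l a \<eta> \<zeta> = kern_form l a \<zeta> \<eta>"
proof (induction \<eta>)
  case empty
  show ?case unfolding kern_form_def kern_sum_def by (induction \<zeta>) auto
next
  case (add x \<eta>)
  have "kern_form l a \<zeta> {#x#} = kern_sum l a \<zeta> x"
    unfolding kern_form_def kern_sum_def by (induction \<zeta>) (auto simp: kern_commute)
  then show ?case using add
    by (metis kern_form_add_left kern_form_add_right kern_form_singleton_left add_mset_add_single add.commute)
qed

lemma kern_quad_add: "kern_quad l a (\<eta> + \<zeta>) = kern_quad l a \<eta> + 2 * kern_form l a \<eta> \<zeta> + kern_quad l a \<zeta>"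
  unfolding kern_form_add_left kern_form_add_right using kern_form_commute[of l a \<zeta> \<eta>] by simp

lemma kern_quad_remove:
  assumes "x \<in># \<eta>" "0 \<le> l" "0 < a"
  shows "kern_quad l a (\<eta> - {#x#}) = kern_quad l a \<eta> - 2 * kern_sum l a \<eta> x + a"
proof -
  define \<eta>0 where "\<eta>0 = \<eta> - {#x#}"
  have \<eta>: "\<eta> = \<eta>0 + {#x#}" using assms(1) by (simp add: \<eta>0_def)
  have self: "kern_sum l a {#x#} x = a" using kern_self[OF assms(2)] assms(3) by (simp add: kern_sum_def)
  have "kern_quad l a \<eta> = kern_quad l a \<eta>0 + 2 * kern_sum l a \<eta>0 x + a"
    unfolding \<eta> kern_quad_add using kern_form_commute[of l a \<eta>0 "{#x#}"]
    by (simp add: kern_form_singleton_left self)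
  moreover have "kern_sum l a \<eta> x = kern_sum l a \<eta>0 x + a"
    unfolding \<eta> kern_sum_add self ..
  ultimately show ?thesis by (simp add: \<eta>0_def)
qed

lemma kern_form_le:
  assumes "set_mset \<eta> \<subseteq> {0..<l}" "set_mset \<zeta> \<subseteq> {0..<l}" "0 \<le> a"
  shows "kern_form l a \<eta> \<zeta> \<le> a * real (size \<eta>) * real (size \<zeta>)"
proof -
  have "kern_sum l a \<zeta> x \<le> sum_mset (image_mset (\<lambda>y. a) \<zeta>)" if "x \<in># \<eta>" for x
    unfolding kern_sum_def using that assms by (intro sum_mset_mono kern_le) auto
  then have "kern_form l a \<eta> \<zeta> \<le> sum_mset (image_mset (\<lambda>x. a * real (size \<zeta>)) \<eta>)"
    unfolding kern_form_def by (intro sum_mset_mono) (simp add: mult.commute)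
  then show ?thesis by (simp add: mult.commute mult.left_commute)
qed

lemma kern_quad_ge_size:
  assumes "0 \<le> l" "0 < a"
  shows "a * real (size \<eta>) \<le> kern_quad l a \<eta>"
proof -
  have "a \<le> kern_sum l a \<eta> x" if "x \<in># \<eta>" for x
  proof -
    have "kern_sum l a \<eta> x = kern_sum l a (\<eta> - {#x#}) x + kern l a x x"
      using that kern_sum_add[of l a "\<eta> - {#x#}" "{#x#}" x] by (simp add: kern_sum_def)
    then show ?thesis using kern_self[OF assms(1)] kern_sum_nonneg[of l a "\<eta> - {#x#}" x] assms(2) by simp
  qed
  then have "sum_mset (image_mset (\<lambda>x. a) \<eta>) \<le> kern_quad l a \<eta>"
    unfolding kern_form_def by (intro sum_mset_mono) auto
  then show ?thesis by (simp add: mult.commute)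
qed

lemma sum_mset_image_nonneg: "(\<And>x. x \<in># M \<Longrightarrow> 0 \<le> f x) \<Longrightarrow> 0 \<le> sum_mset (image_mset f M :: real multiset)"
  by (induction M) auto

lemma sum_mult_sum_mset_swap:
  "(\<Sum>x\<in>A. f x * sum_mset (image_mset (g x) \<zeta>)) = sum_mset (image_mset (\<lambda>z. \<Sum>x\<in>A. f x * g x z) \<zeta>)"
  for f :: "'a \<Rightarrow> real"
  by (induction \<zeta>) (auto simp: distrib_left sum.distrib)

lemma kern_quad_nonneg: "0 \<le> kern_quad l a \<eta>"
  unfolding kern_form_def by (intro sum_mset_image_nonneg kern_sum_nonneg)

lemma sqrt_le_tangent:
  fixes q t :: real
  assumes "0 \<le> q" "0 < t"
  shows "sqrt q \<le> (q + t\<^sup>2) / (2 * t)"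
proof -
  have "0 \<le> (sqrt q - t)\<^sup>2" by simp
  then have "2 * t * sqrt q \<le> q + t\<^sup>2" using assms(1) by (simp add: power2_eq_square algebra_simps)
  then show ?thesis using assms(2) by (simp add: le_divide_eq mult.commute)
qed

locale greedy_circle =
  fixes l r a :: real
  assumes a_pos: "0 < a" and a_le_half_circ: "a \<le> l / 2" and a_le_diam: "a \<le> 2 * r"
begin

lemma l_pos: "0 < l"
  using a_pos a_le_half_circ by simp

lemma prob_space_unif: "prob_space (unif l)"
  unfolding unif_def by (rule prob_space_uniform_measure) (use l_pos in auto)

lemma sets_unif[simp, measurable_cong]: "sets (unif l) = sets borel"
  unfolding unif_def by simp

lemma space_unif[simp]: "space (unif l) = UNIV"
  unfolding unif_def by simp

lemma nn_integral_unif: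
  assumes [measurable]: "f \<in> borel_measurable borel"
  shows "(\<integral>\<^sup>+u. f u \<partial>unif l) = (\<integral>\<^sup>+u. indicator {0..<l} u * f u \<partial>lborel) / ennreal l"
  unfolding unif_def using l_pos by (subst nn_integral_uniform_measure) (auto simp: mult.commute)

lemma measure_unif:
  assumes "S \<in> sets borel" "S \<subseteq> {0..<l}"
  shows "measure (unif l) S = measure lborel S / l"
proof -
  have "measure (unif l) S = measure lborel ({0..<l} \<inter> S) / measure lborel {0..<l}"
    unfolding unif_def by (rule measure_uniform_measure) (use assms l_pos in auto)
  then show ?thesis using assms l_pos by (simp add: Int_absorb1)
qed

definition kern_mean :: "real \<Rightarrow> real" where
  "kern_mean z = enn2real (\<integral>\<^sup>+u. ennreal (kern l a u z) \<partial>unif l)"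

definition kern_mass :: "real multiset \<Rightarrow> real" where
  "kern_mass \<zeta> = sum_mset (image_mset kern_mean \<zeta>)"

lemma kern_mean_nonneg: "0 \<le> kern_mean z"
  by (simp add: kern_mean_def)

lemma kern_mass_nonneg: "0 \<le> kern_mass \<zeta>"
  unfolding kern_mass_def by (intro sum_mset_image_nonneg kern_mean_nonneg)

lemma kern_mass_add: "kern_mass (\<zeta> + \<xi>) = kern_mass \<zeta> + kern_mass \<xi>"
  by (simp add: kern_mass_def)

lemma nn_integral_kern_lborel:
  assumes z: "0 \<le> z" "z < l"
  shows "(\<integral>\<^sup>+u. indicator {0..<l} u * ennreal (kern l a u z) \<partial>lborel) = ennreal (l * kern_mean z)"
    and "kern_mean z \<le> a"
proof -
  have "(\<integral>\<^sup>+u. indicator {0..<l} u * ennreal (kern l a u z) \<partial>lborel) \<le> (\<integral>\<^sup>+u. ennreal a * indicator {0..<l} u \<partial>lborel)"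
    using kern_le[of a _ l z] a_pos z by (intro nn_integral_mono) (auto simp: indicator_def intro!: ennreal_leI)
  also have "\<dots> = ennreal (a * l)" using a_pos l_pos by (simp add: nn_integral_cmult_indicator ennreal_mult)
  finally obtain c where c: "(\<integral>\<^sup>+u. indicator {0..<l} u * ennreal (kern l a u z) \<partial>lborel) = ennreal c"
      "0 \<le> c" "c \<le> a * l"
    using a_pos l_pos by (cases "(\<integral>\<^sup>+u. indicator {0..<l} u * ennreal (kern l a u z) \<partial>lborel)") (auto simp: top_unique)
  have "(\<integral>\<^sup>+u. ennreal (kern l a u z) \<partial>unif l) = ennreal (c / l)"
    using nn_integral_unif[of "\<lambda>u. ennreal (kern l a u z)"] c l_pos by (simp add: divide_ennreal)
  then have "kern_mean z = c / l" using c l_pos by (simp add: kern_mean_def)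
  then show "(\<integral>\<^sup>+u. indicator {0..<l} u * ennreal (kern l a u z) \<partial>lborel) = ennreal (l * kern_mean z)"
    and "kern_mean z \<le> a"
    using c l_pos by (simp_all add: divide_le_eq mult.commute)
qed

text \<open>In fact kern_mean z = a^2 / l; the crude bound below, from the arc of length a/2 after z
  on which the kernel exceeds a/2, is all that is needed.\<close>

lemma kern_mean_ge:
  assumes z: "0 \<le> z" "z < l"
  shows "a\<^sup>2 / (4 * l) \<le> kern_mean z"
proof -
  define B where "B = {u \<in> {0..<l}. fwd_dist l z u \<in> {0..a/2}}"
  have [measurable]: "B \<in> sets borel" unfolding B_def by measurable
  have "ennreal (a / 2) * emeasure lborel B = (\<integral>\<^sup>+u. ennreal (a / 2) * indicator B u \<partial>lborel)"
    by (simp add: nn_integral_cmult_indicator)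
  also have "\<dots> \<le> (\<integral>\<^sup>+u. indicator {0..<l} u * ennreal (kern l a u z) \<partial>lborel)"
  proof (intro nn_integral_mono)
    fix u
    show "ennreal (a / 2) * indicator B u \<le> indicator {0..<l} u * ennreal (kern l a u z)"
    proof (cases "u \<in> B")
      case True
      then have u: "0 \<le> u" "u < l" "fwd_dist l z u \<le> a / 2" by (auto simp: B_def)
      have "circ_dist l u z \<le> a / 2"
        using circ_dist_le_fwd_dist[OF z u(1,2)] circ_dist_commute[of l u z] u by simp
      then show ?thesis using True u by (auto simp: kern_def intro!: ennreal_leI)
    qed simp
  qed
  also have "\<dots> = ennreal (l * kern_mean z)" by (rule nn_integral_kern_lborel(1)[OF z])
  finally have "ennreal (a / 2) * emeasure lborel B \<le> ennreal (l * kern_mean z)" .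
  moreover have "emeasure lborel B = ennreal (a / 2)"
  proof -
    have "emeasure lborel B = emeasure lborel ({0..<l} \<inter> {0..a/2})"
      unfolding B_def by (rule emeasure_fwd_dist_preimage) (use z in auto)
    also have "{0..<l} \<inter> {0..a/2} = {0..a/2}" using a_pos a_le_half_circ by auto
    finally show ?thesis using a_pos by simp
  qed
  ultimately have "a / 2 * (a / 2) \<le> l * kern_mean z"
    using a_pos l_pos kern_mean_nonneg[of z] by (simp add: ennreal_mult[symmetric] ennreal_le_iff del: ennreal_mult)
  then show ?thesis using l_pos by (simp add: power2_eq_square field_simps)
qed

lemma kern_mass_bounds:
  assumes "set_mset \<zeta> \<subseteq> {0..<l}"
  shows "a\<^sup>2 / (4 * l) * real (size \<zeta>) \<le> kern_mass \<zeta>" "kern_mass \<zeta> \<le> a * real (size \<zeta>)"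
proof -
  have "sum_mset (image_mset (\<lambda>z. a\<^sup>2 / (4 * l)) \<zeta>) \<le> kern_mass \<zeta>"
    unfolding kern_mass_def using kern_mean_ge assms by (intro sum_mset_mono) auto
  then show "a\<^sup>2 / (4 * l) * real (size \<zeta>) \<le> kern_mass \<zeta>" by (simp add: mult.commute)
  have "kern_mass \<zeta> \<le> sum_mset (image_mset (\<lambda>z. a) \<zeta>)"
    unfolding kern_mass_def using nn_integral_kern_lborel(2) assms by (intro sum_mset_mono) auto
  then show "kern_mass \<zeta> \<le> a * real (size \<zeta>)" by (simp add: mult.commute)
qed

lemma a_norm_bounds:
  assumes "set_mset \<zeta> \<subseteq> {0..<l}"
  shows "(a_norm l a \<zeta>)\<^sup>2 = kern_quad l a \<zeta>" "sqrt (a * real (size \<zeta>)) \<le> a_norm l a \<zeta>"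
    "a_norm l a \<zeta> \<le> sqrt a * real (size \<zeta>)"
proof -
  have Q: "a * real (size \<zeta>) \<le> kern_quad l a \<zeta>" "kern_quad l a \<zeta> \<le> a * (real (size \<zeta>))\<^sup>2"
    using kern_quad_ge_size[of l a \<zeta>] kern_form_le[OF assms assms] l_pos a_pos
    by (simp_all add: power2_eq_square mult.assoc)
  show "(a_norm l a \<zeta>)\<^sup>2 = kern_quad l a \<zeta>" "sqrt (a * real (size \<zeta>)) \<le> a_norm l a \<zeta>"
    using Q(1) kern_quad_nonneg[of l a \<zeta>] by (simp_all add: a_norm_eq_sqrt_kern_quad)
  show "a_norm l a \<zeta> \<le> sqrt a * real (size \<zeta>)"
    using real_sqrt_le_mono[OF Q(2)] a_pos by (simp add: a_norm_eq_sqrt_kern_quad real_sqrt_mult)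
qed

lemma nn_integral_kern_sum_unif:
  assumes "set_mset \<zeta> \<subseteq> {0..<l}"
  shows "(\<integral>\<^sup>+u. ennreal (kern_sum l a \<zeta> u) \<partial>unif l) = ennreal (kern_mass \<zeta>)"
  using assms
proof (induction \<zeta>)
  case (add x \<zeta>)
  have x: "0 \<le> x" "x < l" using add.prems by auto
  have "(\<integral>\<^sup>+u. ennreal (kern_sum l a (add_mset x \<zeta>) u) \<partial>unif l)
      = (\<integral>\<^sup>+u. ennreal (kern l a u x) + ennreal (kern_sum l a \<zeta> u) \<partial>unif l)"
    by (intro nn_integral_cong) (simp add: kern_sum_def kern_commute kern_nonneg kern_sum_nonneg[unfolded kern_sum_def])
  also have "\<dots> = (\<integral>\<^sup>+u. ennreal (kern l a u x) \<partial>unif l) + (\<integral>\<^sup>+u. ennreal (kern_sum l a \<zeta> u) \<partial>unif l)"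
    by (rule nn_integral_add) auto
  also have "(\<integral>\<^sup>+u. ennreal (kern l a u x) \<partial>unif l) = ennreal (kern_mean x)"
    using nn_integral_unif[of "\<lambda>u. ennreal (kern l a u x)"] nn_integral_kern_lborel(1)[OF x] l_pos
    by (simp add: kern_mean_def divide_ennreal)
  finally show ?case
    using add kern_mean_nonneg[of x] kern_mass_nonneg[of \<zeta>] by (simp add: kern_mass_def ennreal_plus)
qed (simp add: kern_sum_def kern_mass_def)

lemma serve_prob_eq:
  "serve_prob l r \<eta> x = measure lborel (service_region l r \<eta> x) / l"
  unfolding serve_prob_def service_region_def[symmetric]
  by (rule measure_unif) (use service_region_sub in auto)

lemma serve_prob_nonneg: "0 \<le> serve_prob l r \<eta> x"
  unfolding serve_prob_def by simp

lemma sum_serve_prob_le_1: "(\<Sum>x\<in>set_mset \<eta>. serve_prob l r \<eta> x) \<le> 1"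
proof -
  interpret U: prob_space "unif l" by (rule prob_space_unif)
  have "(\<Sum>x\<in>set_mset \<eta>. serve_prob l r \<eta> x) = measure (unif l) (\<Union>x\<in>set_mset \<eta>. service_region l r \<eta> x)"
    unfolding serve_prob_def service_region_def[symmetric]
    by (rule measure_finite_Union[symmetric])
      (auto simp: disjoint_family_on_def service_region_disjoint U.emeasure_finite)
  also have "\<dots> \<le> 1" by (rule U.prob_le_1)
  finally show ?thesis .
qed

lemma kern_mean_le_served_kern:
  assumes \<eta>: "set_mset \<eta> \<subseteq> {0..<l}" and z: "z \<in># \<eta>"
  shows "kern_mean z \<le> (\<Sum>x\<in>set_mset \<eta>. serve_prob l r \<eta> x * kern l a x z)"
proof -
  interpret circle_config l \<eta> by unfold_locales (rule \<eta>)
  have fin: "emeasure lborel (service_region l r \<eta> x) \<noteq> \<top>" for x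
  proof -
    have "emeasure lborel (service_region l r \<eta> x) \<le> emeasure lborel {0..<l}"
      by (rule emeasure_mono) (use service_region_sub in auto)
    then show ?thesis using l_pos by (auto simp: top_unique)
  qed
  have "ennreal (l * kern_mean z)
      \<le> (\<Sum>x\<in>set_mset \<eta>. emeasure lborel (service_region l r \<eta> x) * ennreal (kern l a x z))"
    using nn_integral_kern_le_service_regions[OF z a_pos a_le_diam] nn_integral_kern_lborel(1) z \<eta> by auto
  also have "\<dots> = (\<Sum>x\<in>set_mset \<eta>. ennreal (measure lborel (service_region l r \<eta> x) * kern l a x z))"
    by (intro sum.cong refl) (simp add: emeasure_eq_ennreal_measure[OF fin] ennreal_mult kern_nonneg)
  also have "\<dots> = ennreal (\<Sum>x\<in>set_mset \<eta>. measure lborel (service_region l r \<eta> x) * kern l a x z)"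
    by (rule sum_ennreal) (simp add: kern_nonneg)
  finally have "l * kern_mean z \<le> (\<Sum>x\<in>set_mset \<eta>. measure lborel (service_region l r \<eta> x) * kern l a x z)"
    by (subst (asm) ennreal_le_iff) (auto intro!: sum_nonneg simp: kern_nonneg)
  also have "\<dots> = l * (\<Sum>x\<in>set_mset \<eta>. serve_prob l r \<eta> x * kern l a x z)"
    unfolding sum_distrib_left using l_pos by (intro sum.cong) (simp_all add: serve_prob_eq)
  finally show ?thesis using l_pos by simp
qed

lemma kern_mass_le_served_kern_sum:
  assumes "set_mset \<eta> \<subseteq> {0..<l}"
  shows "kern_mass \<eta> \<le> (\<Sum>x\<in>set_mset \<eta>. serve_prob l r \<eta> x * kern_sum l a \<eta> x)"
proof -
  have "kern_mass \<eta> \<le> sum_mset (image_mset (\<lambda>z. \<Sum>x\<in>set_mset \<eta>. serve_prob l r \<eta> x * kern l a x z) \<eta>)"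
    unfolding kern_mass_def using kern_mean_le_served_kern[OF assms] by (rule sum_mset_mono)
  also have "\<dots> = (\<Sum>x\<in>set_mset \<eta>. serve_prob l r \<eta> x * kern_sum l a \<eta> x)"
    unfolding kern_sum_def by (rule sum_mult_sum_mset_swap[symmetric])
  finally show ?thesis .
qed

lemma serve_exp_le:
  assumes \<eta>: "set_mset \<eta> \<subseteq> {0..<l}" and t: "0 < t"
  shows "serve_exp l r (a_norm l a) \<eta> \<le> (kern_quad l a \<eta> - 2 * kern_mass \<eta> + a + t\<^sup>2) / (2 * t)"
proof -
  define p where "p = serve_prob l r \<eta>"
  define P where "P = (\<Sum>x\<in>set_mset \<eta>. p x)"
  define Q where "Q = kern_quad l a \<eta>"
  have p: "\<And>x. 0 \<le> p x" "P \<le> 1" by (simp_all add: p_def P_def serve_prob_nonneg sum_serve_prob_le_1)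
  have "serve_exp l r (a_norm l a) \<eta>
      = (\<Sum>x\<in>set_mset \<eta>. p x * sqrt (kern_quad l a (\<eta> - {#x#}))) + (1 - P) * sqrt Q"
    unfolding serve_exp_def a_norm_eq_sqrt_kern_quad by (simp add: p_def P_def Q_def)
  also have "\<dots> \<le> (\<Sum>x\<in>set_mset \<eta>. p x * ((kern_quad l a (\<eta> - {#x#}) + t\<^sup>2) / (2 * t)))
      + (1 - P) * ((Q + t\<^sup>2) / (2 * t))"
    using p by (intro add_mono sum_mono mult_left_mono sqrt_le_tangent kern_quad_nonneg t)
      (auto simp: Q_def kern_quad_nonneg)
  also have "\<dots> = (\<Sum>x\<in>set_mset \<eta>. p x * ((Q - 2 * kern_sum l a \<eta> x + a + t\<^sup>2) / (2 * t)))
      + (1 - P) * ((Q + t\<^sup>2) / (2 * t))"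
    using l_pos a_pos by (simp add: kern_quad_remove Q_def)
  also have "(\<Sum>x\<in>set_mset \<eta>. p x * ((Q - 2 * kern_sum l a \<eta> x + a + t\<^sup>2) / (2 * t)))
      = (\<Sum>x\<in>set_mset \<eta>. p x * (Q + a + t\<^sup>2) - 2 * (p x * kern_sum l a \<eta> x)) / (2 * t)"
    unfolding sum_divide_distrib using t by (intro sum.cong) (auto simp: field_simps)
  also have "\<dots> = ((Q + a + t\<^sup>2) * P - 2 * (\<Sum>x\<in>set_mset \<eta>. p x * kern_sum l a \<eta> x)) / (2 * t)"
    by (simp add: P_def sum_subtractf sum_distrib_right sum_distrib_left mult.commute)
  also have "\<dots> + (1 - P) * ((Q + t\<^sup>2) / (2 * t))
      = (Q - 2 * (\<Sum>x\<in>set_mset \<eta>. p x * kern_sum l a \<eta> x) + a * P + t\<^sup>2) / (2 * t)"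
    using t by (simp add: field_simps)
  also have "\<dots> \<le> (Q - 2 * kern_mass \<eta> + a + t\<^sup>2) / (2 * t)"
    using kern_mass_le_served_kern_sum[OF \<eta>] mult_left_le[OF p(2) less_imp_le[OF a_pos]] t
    by (intro divide_right_mono) (auto simp: p_def)
  finally show ?thesis by (simp add: Q_def)
qed

end

lemma poisson_moment_sums:
  fixes \<mu> :: real
  shows "(\<lambda>n. exp (-\<mu>) * \<mu> ^ n / fact n) sums 1"
    and "(\<lambda>n. real n * (exp (-\<mu>) * \<mu> ^ n / fact n)) sums \<mu>"
    and "(\<lambda>n. (real n)\<^sup>2 * (exp (-\<mu>) * \<mu> ^ n / fact n)) sums (\<mu> + \<mu>\<^sup>2)"
proof -
  define e where "e n = \<mu> ^ n / fact n" for n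
  have "e = (\<lambda>n. inverse (fact n) * \<mu> ^ n)"
    by (rule ext) (simp add: e_def divide_inverse mult.commute)
  then have E: "e sums exp \<mu>"
    using exp_converges[of \<mu>] by (simp add: scaleR_conv_of_real)
  have shift: "real (Suc m) * e (Suc m) = \<mu> * e m" for m
  proof -
    have "(fact (Suc m) :: real) = real (Suc m) * fact m" by (simp only: fact_Suc of_nat_mult)
    then show ?thesis by (simp add: e_def del: of_nat_Suc)
  qed
  have G: "(\<lambda>n. real n * e n) sums (\<mu> * exp \<mu>)"
  proof -
    have "(\<lambda>m. real (Suc m) * e (Suc m)) sums (\<mu> * exp \<mu>)"
      unfolding shift by (rule sums_mult[OF E])
    then show ?thesis by (subst (asm) sums_Suc_iff) simp
  qed
  have H: "(\<lambda>n. (real n)\<^sup>2 * e n) sums (\<mu> * (\<mu> * exp \<mu> + exp \<mu>))"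
  proof -
    have "(real (Suc m))\<^sup>2 * e (Suc m) = \<mu> * (real m * e m + e m)" for m
    proof -
      have "(real (Suc m))\<^sup>2 * e (Suc m) = real (Suc m) * (real (Suc m) * e (Suc m))"
        by (simp add: power2_eq_square)
      also have "\<dots> = real (Suc m) * (\<mu> * e m)" by (simp only: shift)
      finally show ?thesis by (simp add: algebra_simps)
    qed
    then have "(\<lambda>m. (real (Suc m))\<^sup>2 * e (Suc m)) sums (\<mu> * (\<mu> * exp \<mu> + exp \<mu>))"
      using sums_mult[OF sums_add[OF G E], of \<mu>] by simp
    then show ?thesis by (subst (asm) sums_Suc_iff) simp
  qed
  show "(\<lambda>n. exp (-\<mu>) * \<mu> ^ n / fact n) sums 1"
    using sums_mult[OF E, of "exp (-\<mu>)"] by (simp add: e_def exp_minus field_simps)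
  show "(\<lambda>n. real n * (exp (-\<mu>) * \<mu> ^ n / fact n)) sums \<mu>"
    using sums_mult[OF G, of "exp (-\<mu>)"] by (simp add: e_def exp_minus field_simps)
  have "exp (-\<mu>) * (\<mu> * (\<mu> * exp \<mu> + exp \<mu>)) = \<mu> + \<mu>\<^sup>2"
    by (simp add: exp_minus power2_eq_square field_simps)
  then show "(\<lambda>n. (real n)\<^sup>2 * (exp (-\<mu>) * \<mu> ^ n / fact n)) sums (\<mu> + \<mu>\<^sup>2)"
    using sums_mult[OF H, of "exp (-\<mu>)"] by (simp add: e_def mult.left_commute)
qed

lemma suminf_poisson_quadratic:
  fixes \<mu> A B D :: real
  assumes "0 \<le> \<mu>" "0 \<le> A" "0 \<le> B" "0 \<le> D"
  shows "(\<Sum>n. ennreal (exp (-\<mu>) * \<mu> ^ n / fact n * (A + B * real n + D * (real n)\<^sup>2)))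
      = ennreal (A + B * \<mu> + D * (\<mu> + \<mu>\<^sup>2))"
proof -
  define q where "q n = exp (-\<mu>) * \<mu> ^ n / fact n * (A + B * real n + D * (real n)\<^sup>2)" for n
  have "q = (\<lambda>n. A * (exp (-\<mu>) * \<mu> ^ n / fact n) + B * (real n * (exp (-\<mu>) * \<mu> ^ n / fact n))
      + D * ((real n)\<^sup>2 * (exp (-\<mu>) * \<mu> ^ n / fact n)))"
    by (rule ext) (simp add: q_def algebra_simps)
  then have S: "q sums (A * 1 + B * \<mu> + D * (\<mu> + \<mu>\<^sup>2))"
    by (simp only:) (intro sums_add sums_mult poisson_moment_sums)
  have "0 \<le> q n" for n using assms by (simp add: q_def)
  then have "(\<Sum>n. ennreal (q n)) = ennreal (\<Sum>n. q n)"
    using S by (intro suminf_ennreal2) (auto simp: sums_iff)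
  also have "(\<Sum>n. q n) = A + B * \<mu> + D * (\<mu> + \<mu>\<^sup>2)"
    using S by (simp add: sums_iff)
  finally show ?thesis by (simp only: q_def)
qed

locale arrival_law = prob_space G for G :: "real measure" +
  fixes lam :: real
  assumes sets_G[measurable_cong]: "sets G = sets borel"
    and service_nonneg: "AE s in G. 0 \<le> s"
    and second_moment_finite: "(\<integral>\<^sup>+ s. ennreal (s ^ 2) \<partial>G) < \<infinity>"
    and lam_nonneg: "0 \<le> lam"
begin

definition second_moment :: real where
  "second_moment = enn2real (\<integral>\<^sup>+ s. ennreal (s ^ 2) \<partial>G)"

text \<open>Given the service time s, drawn from G, the number N of arrivals is Poisson with mean
  lam s; mean_arrivals and mean_sq_arrivals are E N and E N^2.\<close>

definition mean_arrivals :: real where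
  "mean_arrivals = lam * (\<integral>s. s \<partial>G)"

definition mean_sq_arrivals :: real where
  "mean_sq_arrivals = lam * (\<integral>s. s \<partial>G) + lam\<^sup>2 * second_moment"

lemma nn_integral_sq_eq: "(\<integral>\<^sup>+ s. ennreal (s ^ 2) \<partial>G) = ennreal second_moment"
  using second_moment_finite by (simp add: second_moment_def)

lemma integrable_id: "integrable G (\<lambda>s. s)"
proof (rule integrableI_bounded)
  have "(\<integral>\<^sup>+ s. ennreal (norm s) \<partial>G) \<le> (\<integral>\<^sup>+ s. 1 + ennreal (s ^ 2) \<partial>G)"
  proof (intro nn_integral_mono)
    fix s :: real
    have "0 \<le> (\<bar>s\<bar> - 1)\<^sup>2" by simp
    then have "2 * \<bar>s\<bar> \<le> 1 + s ^ 2" by (simp add: power2_eq_square algebra_simps)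
    then have "norm s \<le> 1 + s ^ 2" by simp
    then show "ennreal (norm s) \<le> 1 + ennreal (s ^ 2)"
      by (metis ennreal_1 ennreal_leI ennreal_plus zero_le_one zero_le_power2)
  qed
  also have "\<dots> = 1 + (\<integral>\<^sup>+ s. ennreal (s ^ 2) \<partial>G)"
    by (subst nn_integral_add) (auto simp: emeasure_space_1)
  also have "\<dots> < \<infinity>" using second_moment_finite by (simp add: ennreal_add_eq_top less_top)
  finally show "(\<integral>\<^sup>+ s. ennreal (norm s) \<partial>G) < \<infinity>" .
qed simp

lemma nn_integral_id_eq: "(\<integral>\<^sup>+ s. ennreal s \<partial>G) = ennreal (\<integral>s. s \<partial>G)"
  by (rule nn_integral_eq_integral[OF integrable_id service_nonneg])

lemma mean_nonneg: "0 \<le> (\<integral>s. s \<partial>G)"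
  by (rule integral_nonneg_AE[OF service_nonneg])

lemma mean_arrivals_nonneg: "0 \<le> mean_arrivals"
  using mean_nonneg lam_nonneg by (simp add: mean_arrivals_def)

lemma mean_sq_arrivals_nonneg: "0 \<le> mean_sq_arrivals"
  using mean_nonneg lam_nonneg by (simp add: mean_sq_arrivals_def second_moment_def)

lemma nn_integral_quadratic:
  assumes "0 \<le> A" "0 \<le> C" "0 \<le> E"
  shows "(\<integral>\<^sup>+ s. ennreal A + ennreal C * ennreal s + ennreal E * ennreal (s ^ 2) \<partial>G)
      = ennreal (A + C * (\<integral>s. s \<partial>G) + E * second_moment)"
proof -
  have "(\<integral>\<^sup>+ s. ennreal A + ennreal C * ennreal s + ennreal E * ennreal (s ^ 2) \<partial>G)
      = (\<integral>\<^sup>+ s. ennreal A + ennreal C * ennreal s \<partial>G) + (\<integral>\<^sup>+ s. ennreal E * ennreal (s ^ 2) \<partial>G)"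
    by (rule nn_integral_add) auto
  also have "(\<integral>\<^sup>+ s. ennreal A + ennreal C * ennreal s \<partial>G)
      = (\<integral>\<^sup>+ s. ennreal A \<partial>G) + (\<integral>\<^sup>+ s. ennreal C * ennreal s \<partial>G)"
    by (rule nn_integral_add) auto
  also have "(\<integral>\<^sup>+ s. ennreal A \<partial>G) = ennreal A"
    by (simp add: emeasure_space_1)
  also have "(\<integral>\<^sup>+ s. ennreal C * ennreal s \<partial>G) = ennreal C * ennreal (\<integral>s. s \<partial>G)"
    by (subst nn_integral_cmult) (simp_all add: nn_integral_id_eq)
  also have "(\<integral>\<^sup>+ s. ennreal E * ennreal (s ^ 2) \<partial>G) = ennreal E * ennreal second_moment"
    by (subst nn_integral_cmult) (simp_all add: nn_integral_sq_eq)
  also have "ennreal A + ennreal C * ennreal (\<integral>s. s \<partial>G) + ennreal E * ennreal second_moment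
      = ennreal (A + C * (\<integral>s. s \<partial>G) + E * second_moment)"
    using assms mean_nonneg by (simp add: ennreal_mult second_moment_def)
  finally show ?thesis .
qed

lemma suminf_arrival_prob_quadratic:
  assumes coef: "0 \<le> A" "0 \<le> B" "0 \<le> D"
  shows "(\<Sum>n. arrival_prob lam G n * ennreal (A + B * real n + D * (real n)\<^sup>2))
       = ennreal (A + B * mean_arrivals + D * mean_sq_arrivals)"
proof -
  define p where "p n s = exp (- lam * s) * (lam * s) ^ n / fact n" for n s
  define c where "c n = A + B * real n + D * (real n)\<^sup>2" for n :: nat
  have c0: "0 \<le> c n" for n using coef by (simp add: c_def)
  have "(\<Sum>n. arrival_prob lam G n * ennreal (c n)) = (\<Sum>n. \<integral>\<^sup>+ s. ennreal (p n s * c n) \<partial>G)"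
  proof (intro suminf_cong)
    fix n
    have "arrival_prob lam G n * ennreal (c n) = (\<integral>\<^sup>+ s. ennreal (p n s) * ennreal (c n) \<partial>G)"
      unfolding arrival_prob_def p_def by (rule nn_integral_multc[symmetric]) measurable
    also have "\<dots> = (\<integral>\<^sup>+ s. ennreal (p n s * c n) \<partial>G)"
      using c0[of n] by (intro nn_integral_cong) (simp add: ennreal_mult'')
    finally show "arrival_prob lam G n * ennreal (c n) = (\<integral>\<^sup>+ s. ennreal (p n s * c n) \<partial>G)" .
  qed
  also have "\<dots> = (\<integral>\<^sup>+ s. (\<Sum>n. ennreal (p n s * c n)) \<partial>G)"
    by (rule nn_integral_suminf[symmetric]) (unfold p_def c_def, measurable)
  also have "\<dots> = (\<integral>\<^sup>+ s. ennreal A + ennreal (B * lam + D * lam) * ennreal s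
                           + ennreal (D * lam\<^sup>2) * ennreal (s ^ 2) \<partial>G)"
  proof (rule nn_integral_cong_AE)
    show "AE s in G. (\<Sum>n. ennreal (p n s * c n)) = ennreal A + ennreal (B * lam + D * lam) * ennreal s
                           + ennreal (D * lam\<^sup>2) * ennreal (s ^ 2)"
      using service_nonneg
    proof eventually_elim
      case (elim s)
      have "p n s * c n = exp (- (lam * s)) * (lam * s) ^ n / fact n * (A + B * real n + D * (real n)\<^sup>2)" for n
        by (simp add: p_def c_def)
      then have "(\<Sum>n. ennreal (p n s * c n))
          = (\<Sum>n. ennreal (exp (- (lam * s)) * (lam * s) ^ n / fact n * (A + B * real n + D * (real n)\<^sup>2)))"
        by presburger
      also have "\<dots> = ennreal (A + B * (lam * s) + D * (lam * s + (lam * s)\<^sup>2))"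
        using coef lam_nonneg elim by (intro suminf_poisson_quadratic) auto
      also have "\<dots> = ennreal A + ennreal (B * lam + D * lam) * ennreal s + ennreal (D * lam\<^sup>2) * ennreal (s ^ 2)"
        using coef lam_nonneg elim
        by (simp add: ennreal_mult[symmetric] ennreal_plus[symmetric] power2_eq_square algebra_simps
            del: ennreal_plus)
      finally show ?case .
    qed
  qed
  also have "\<dots> = ennreal (A + (B * lam + D * lam) * (\<integral>s. s \<partial>G) + D * lam\<^sup>2 * second_moment)"
    using coef lam_nonneg by (intro nn_integral_quadratic) auto
  also have "A + (B * lam + D * lam) * (\<integral>s. s \<partial>G) + D * lam\<^sup>2 * second_moment
      = A + B * mean_arrivals + D * mean_sq_arrivals"
    by (simp add: mean_arrivals_def mean_sq_arrivals_def algebra_simps)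
  finally show ?thesis by (simp add: c_def)
qed

end

lemma sum_mset_arrivals: "sum_mset (image_mset f (mset (map y [0..<n]))) = (\<Sum>i<n. f (y i) :: real)"
proof -
  have "image_mset f (mset (map y [0..<n])) = mset (map (f \<circ> y) [0..<n])"
    by (simp only: mset_map[symmetric] map_map)
  then have "sum_mset (image_mset f (mset (map y [0..<n]))) = sum_list (map (f \<circ> y) [0..<n])"
    by (simp only: sum_mset_sum_list)
  also have "\<dots> = (\<Sum>i<n. f (y i))" by (simp add: interv_sum_list_conv_sum_set_nat atLeast0LessThan)
  finally show ?thesis .
qed

context greedy_circle
begin

lemma prob_space_PiM_unif: "prob_space (PiM {..<n::nat} (\<lambda>_. unif l))"
  by (intro prob_space_PiM prob_space_unif)

lemma PiM_unif_component: "i < (n::nat) \<Longrightarrow> distr (PiM {..<n} (\<lambda>_. unif l)) (unif l) (\<lambda>\<omega>. \<omega> i) = unif l"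
proof -
  interpret product_prob_space "\<lambda>_. unif l" "{..<n}"
    by (intro product_prob_spaceI prob_space_unif)
  show "i < n \<Longrightarrow> ?thesis" using PiM_component[of i] by simp
qed

lemma AE_PiM_unif_in_circle: "AE y in PiM {..<n::nat} (\<lambda>_. unif l). \<forall>i\<in>{..<n}. y i \<in> {0..<l}"
proof (rule AE_finite_allI)
  fix i assume i: "i \<in> {..<n}"
  have "AE u in unif l. u \<in> {0..<l}" unfolding unif_def by (rule AE_uniform_measureI) auto
  then have "AE u in distr (PiM {..<n} (\<lambda>_. unif l)) (unif l) (\<lambda>\<omega>. \<omega> i). u \<in> {0..<l}"
    using i by (subst PiM_unif_component) auto
  then show "AE y in PiM {..<n} (\<lambda>_. unif l). y i \<in> {0..<l}"
    by (rule AE_distrD[rotated]) (use i in simp)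
qed simp

lemma nn_integral_PiM_unif_component:
  assumes [measurable]: "f \<in> borel_measurable borel" and i: "i < (n::nat)"
  shows "(\<integral>\<^sup>+y. f (y i) \<partial>PiM {..<n} (\<lambda>_. unif l)) = (\<integral>\<^sup>+u. f u \<partial>unif l)"
proof -
  have "(\<lambda>\<omega>. \<omega> i) \<in> measurable (PiM {..<n} (\<lambda>_. unif l)) (unif l)"
    using i by (intro measurable_component_singleton) simp
  then have "(\<integral>\<^sup>+y. f (y i) \<partial>PiM {..<n} (\<lambda>_. unif l))
      = (\<integral>\<^sup>+u. f u \<partial>distr (PiM {..<n} (\<lambda>_. unif l)) (unif l) (\<lambda>\<omega>. \<omega> i))"
    by (subst nn_integral_distr) auto
  then show ?thesis using PiM_unif_component[OF i] by simp
qed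

lemma serve_exp_after_arrivals_le:
  assumes \<zeta>: "set_mset \<zeta> \<subseteq> {0..<l}" and y: "\<forall>i\<in>{..<n}. y i \<in> {0..<l}" and t: "0 < t"
  shows "serve_exp l r (a_norm l a) (\<zeta> + mset (map y [0..<n]))
     \<le> (kern_quad l a \<zeta> - 2 * kern_mass \<zeta> + a + t\<^sup>2) / (2 * t) + a / (2 * t) * (real n)\<^sup>2
        + (\<Sum>i<n. kern_sum l a \<zeta> (y i)) / t"
proof -
  define \<xi> where "\<xi> = mset (map y [0..<n])"
  have \<xi>: "set_mset \<xi> \<subseteq> {0..<l}" using y by (auto simp: \<xi>_def)
  have "kern_quad l a (\<zeta> + \<xi>) = kern_quad l a \<zeta> + 2 * kern_form l a \<zeta> \<xi> + kern_quad l a \<xi>"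
    by (rule kern_quad_add)
  moreover have "kern_form l a \<xi> \<zeta> = (\<Sum>i<n. kern_sum l a \<zeta> (y i))"
    unfolding kern_form_def \<xi>_def by (rule sum_mset_arrivals)
  then have "kern_form l a \<zeta> \<xi> = (\<Sum>i<n. kern_sum l a \<zeta> (y i))"
    using kern_form_commute[of l a \<zeta> \<xi>] by simp
  moreover have "kern_quad l a \<xi> \<le> a * (real n)\<^sup>2"
    using kern_form_le[OF \<xi> \<xi>] a_pos by (simp add: \<xi>_def power2_eq_square mult.assoc)
  moreover have "kern_mass \<zeta> \<le> kern_mass (\<zeta> + \<xi>)"
    using kern_mass_nonneg[of \<xi>] by (simp add: kern_mass_add)
  ultimately have num: "kern_quad l a (\<zeta> + \<xi>) - 2 * kern_mass (\<zeta> + \<xi>) + a + t\<^sup>2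
      \<le> kern_quad l a \<zeta> - 2 * kern_mass \<zeta> + a + t\<^sup>2 + a * (real n)\<^sup>2 + 2 * (\<Sum>i<n. kern_sum l a \<zeta> (y i))"
    by linarith
  have "serve_exp l r (a_norm l a) (\<zeta> + \<xi>)
      \<le> (kern_quad l a (\<zeta> + \<xi>) - 2 * kern_mass (\<zeta> + \<xi>) + a + t\<^sup>2) / (2 * t)"
    using \<zeta> \<xi> t by (intro serve_exp_le) auto
  also have "\<dots> \<le> (kern_quad l a \<zeta> - 2 * kern_mass \<zeta> + a + t\<^sup>2 + a * (real n)\<^sup>2
      + 2 * (\<Sum>i<n. kern_sum l a \<zeta> (y i))) / (2 * t)"
    using num t by (intro divide_right_mono) auto
  also have "\<dots> = (kern_quad l a \<zeta> - 2 * kern_mass \<zeta> + a + t\<^sup>2) / (2 * t) + a / (2 * t) * (real n)\<^sup>2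
        + (\<Sum>i<n. kern_sum l a \<zeta> (y i)) / t"
    using t by (simp add: field_simps)
  finally show ?thesis by (simp add: \<xi>_def)
qed

lemma nn_integral_serve_exp_after_arrivals_le:
  assumes \<zeta>: "set_mset \<zeta> \<subseteq> {0..<l}" and t: "0 < t"
    and C: "0 \<le> kern_quad l a \<zeta> - 2 * kern_mass \<zeta> + a + t\<^sup>2"
  shows "(\<integral>\<^sup>+ y. ennreal (serve_exp l r (a_norm l a) (\<zeta> + mset (map y [0..<n]))) \<partial>PiM {..<n} (\<lambda>_. unif l))
      \<le> ennreal ((kern_quad l a \<zeta> - 2 * kern_mass \<zeta> + a + t\<^sup>2) / (2 * t)
          + kern_mass \<zeta> / t * real n + a / (2 * t) * (real n)\<^sup>2)"
proof -
  define C where "C = (kern_quad l a \<zeta> - 2 * kern_mass \<zeta> + a + t\<^sup>2) / (2 * t) + a / (2 * t) * (real n)\<^sup>2"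
  have C0: "0 \<le> C" using C t a_pos by (simp add: C_def)
  interpret P: prob_space "PiM {..<n} (\<lambda>_. unif l)" by (rule prob_space_PiM_unif)
  have "(\<integral>\<^sup>+ y. ennreal (serve_exp l r (a_norm l a) (\<zeta> + mset (map y [0..<n]))) \<partial>PiM {..<n} (\<lambda>_. unif l))
     \<le> (\<integral>\<^sup>+ y. ennreal C + (\<Sum>i<n. ennreal (kern_sum l a \<zeta> (y i) / t)) \<partial>PiM {..<n} (\<lambda>_. unif l))"
  proof (rule nn_integral_mono_AE)
    show "AE y in PiM {..<n} (\<lambda>_. unif l). ennreal (serve_exp l r (a_norm l a) (\<zeta> + mset (map y [0..<n])))
       \<le> ennreal C + (\<Sum>i<n. ennreal (kern_sum l a \<zeta> (y i) / t))"
      using AE_PiM_unif_in_circle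
    proof (eventually_elim)
      case (elim y)
      have "serve_exp l r (a_norm l a) (\<zeta> + mset (map y [0..<n])) \<le> C + (\<Sum>i<n. kern_sum l a \<zeta> (y i) / t)"
        using serve_exp_after_arrivals_le[OF \<zeta> elim t] by (simp add: C_def sum_divide_distrib)
      then show ?case
        using C0 t by (simp add: ennreal_plus[symmetric] sum_ennreal kern_sum_nonneg sum_nonneg ennreal_leI
            del: ennreal_plus)
    qed
  qed
  also have "\<dots> = ennreal C + (\<Sum>i<n. (\<integral>\<^sup>+ y. ennreal (kern_sum l a \<zeta> (y i) / t) \<partial>PiM {..<n} (\<lambda>_. unif l)))"
    by (simp add: nn_integral_add nn_integral_sum P.emeasure_space_1)
  also have "\<dots> = ennreal C + (\<Sum>i<n. ennreal (kern_mass \<zeta> / t))"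
  proof -
    have "(\<integral>\<^sup>+ y. ennreal (kern_sum l a \<zeta> (y i) / t) \<partial>PiM {..<n} (\<lambda>_. unif l)) = ennreal (kern_mass \<zeta> / t)"
      if "i < n" for i
    proof -
      have "(\<integral>\<^sup>+ y. ennreal (kern_sum l a \<zeta> (y i) / t) \<partial>PiM {..<n} (\<lambda>_. unif l))
          = (\<integral>\<^sup>+ u. ennreal (1 / t) * ennreal (kern_sum l a \<zeta> u) \<partial>unif l)"
        using that t by (subst nn_integral_PiM_unif_component)
          (auto intro!: nn_integral_cong simp: ennreal_mult[symmetric] kern_sum_nonneg)
      also have "\<dots> = ennreal (1 / t) * ennreal (kern_mass \<zeta>)"
        by (simp add: nn_integral_cmult nn_integral_kern_sum_unif[OF \<zeta>])
      finally show ?thesis using t kern_mass_nonneg[of \<zeta>] by (simp add: ennreal_mult[symmetric])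
    qed
    then show ?thesis by simp
  qed
  also have "\<dots> = ennreal ((kern_quad l a \<zeta> - 2 * kern_mass \<zeta> + a + t\<^sup>2) / (2 * t)
          + kern_mass \<zeta> / t * real n + a / (2 * t) * (real n)\<^sup>2)"
    using C0 t kern_mass_nonneg[of \<zeta>]
    by (simp add: ennreal_plus[symmetric] ennreal_of_nat_eq_real_of_nat ennreal_mult[symmetric] C_def
        algebra_simps del: ennreal_plus)
  finally show ?thesis .
qed

end

locale greedy_polling = greedy_circle l r a + arrival_law G lam
  for l r a :: real and G :: "real measure" and lam :: real
begin

lemma step_exp_le_tangent:
  assumes \<zeta>: "set_mset \<zeta> \<subseteq> {0..<l}" and t: "0 < t"
    and C: "0 \<le> kern_quad l a \<zeta> - 2 * kern_mass \<zeta> + a + t\<^sup>2"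
  shows "step_exp l r lam G (a_norm l a) \<zeta>
     \<le> ennreal ((kern_quad l a \<zeta> - 2 * kern_mass \<zeta> + a + t\<^sup>2) / (2 * t)
          + kern_mass \<zeta> / t * mean_arrivals + a / (2 * t) * mean_sq_arrivals)"
proof -
  define A where "A = (kern_quad l a \<zeta> - 2 * kern_mass \<zeta> + a + t\<^sup>2) / (2 * t)"
  define B where "B = kern_mass \<zeta> / t"
  define D where "D = a / (2 * t)"
  have "step_exp l r lam G (a_norm l a) \<zeta> \<le> (\<Sum>n. arrival_prob lam G n * ennreal (A + B * real n + D * (real n)\<^sup>2))"
    unfolding step_exp_def
  proof (rule suminf_le)
    fix n
    show "arrival_prob lam G n *
          (\<integral>\<^sup>+ y. ennreal (serve_exp l r (a_norm l a) (\<zeta> + mset (map y [0..<n]))) \<partial>PiM {..<n} (\<lambda>_. unif l))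
        \<le> arrival_prob lam G n * ennreal (A + B * real n + D * (real n)\<^sup>2)"
      using nn_integral_serve_exp_after_arrivals_le[OF \<zeta> t C, of n]
      by (intro mult_left_mono) (simp_all add: A_def B_def D_def)
  qed (rule summableI)+
  also have "\<dots> = ennreal (A + B * mean_arrivals + D * mean_sq_arrivals)"
    using C t a_pos kern_mass_nonneg[of \<zeta>] by (intro suminf_arrival_prob_quadratic) (simp_all add: A_def B_def D_def)
  finally show ?thesis by (simp add: A_def B_def D_def)
qed

definition drift_offset :: real where
  "drift_offset = a + a * mean_sq_arrivals"

lemma drift_offset_nonneg: "0 \<le> drift_offset"
  using a_pos mean_sq_arrivals_nonneg by (simp add: drift_offset_def)

text \<open>Choosing the tangent point t = a_norm l a \<zeta> gives the drift bound.\<close>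

lemma step_exp_le_drift:
  assumes \<zeta>: "set_mset \<zeta> \<subseteq> {0..<l}" and ne: "\<zeta> \<noteq> {#}"
  shows "step_exp l r lam G (a_norm l a) \<zeta>
     \<le> ennreal (a_norm l a \<zeta> + (drift_offset - 2 * (1 - mean_arrivals) * kern_mass \<zeta>) / (2 * a_norm l a \<zeta>))"
proof -
  define t where "t = a_norm l a \<zeta>"
  have "0 < sqrt (a * real (size \<zeta>))" using ne a_pos by (simp add: nonempty_has_size)
  then have t: "0 < t" "t\<^sup>2 = kern_quad l a \<zeta>"
    using a_norm_bounds[OF \<zeta>] unfolding t_def by linarith+
  have "0 \<le> kern_quad l a \<zeta> - 2 * kern_mass \<zeta> + a + t\<^sup>2"
    using kern_quad_ge_size[of l a \<zeta>] kern_mass_bounds(2)[OF \<zeta>] t(2) l_pos a_pos by linarith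
  moreover have "(kern_quad l a \<zeta> - 2 * kern_mass \<zeta> + a + t\<^sup>2) / (2 * t)
          + kern_mass \<zeta> / t * mean_arrivals + a / (2 * t) * mean_sq_arrivals
      = t + (drift_offset - 2 * (1 - mean_arrivals) * kern_mass \<zeta>) / (2 * t)"
    unfolding t(2)[symmetric] drift_offset_def using t(1) by (simp add: power2_eq_square field_simps)
  ultimately show ?thesis
    using step_exp_le_tangent[OF \<zeta> t(1)] by (simp add: t_def)
qed

lemma step_exp_empty_le: "step_exp l r lam G (a_norm l a) {#} \<le> ennreal ((1 + drift_offset) / 2)"
  using step_exp_le_tangent[of "{#}" 1] a_pos
  by (simp add: kern_form_def kern_mass_def drift_offset_def add_divide_distrib add_ac)

text \<open>Once drift_offset is dominated by the service gain, which is linear in |\<zeta>|, the drift is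
  bounded away from 0 because a_norm l a \<zeta> \<le> sqrt a * |\<zeta>|.\<close>

lemma step_exp_add_le_of_large:
  assumes stable: "mean_arrivals < 1" and \<zeta>: "set_mset \<zeta> \<subseteq> {0..<l}" and ne: "\<zeta> \<noteq> {#}"
    and big: "drift_offset \<le> (1 - mean_arrivals) * (a\<^sup>2 / (4 * l)) * real (size \<zeta>)"
  shows "step_exp l r lam G (a_norm l a) \<zeta> + ennreal ((1 - mean_arrivals) * (a\<^sup>2 / (4 * l)) / (2 * sqrt a))
      \<le> ennreal (a_norm l a \<zeta>)"
proof -
  define t where "t = a_norm l a \<zeta>"
  define k where "k = real (size \<zeta>)"
  define c where "c = a\<^sup>2 / (4 * l)"
  define m where "m = 1 - mean_arrivals"
  have m: "0 < m" "m \<le> 1" using stable mean_arrivals_nonneg by (simp_all add: m_def)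
  have c: "0 < c" using a_pos l_pos by (simp add: c_def)
  have k: "1 \<le> k" using ne by (simp add: k_def Suc_le_eq nonempty_has_size)
  have "0 < sqrt (a * k)" using a_pos k by simp
  then have t: "0 < t" "t\<^sup>2 = kern_quad l a \<zeta>" "t \<le> sqrt a * k"
    using a_norm_bounds[OF \<zeta>] unfolding t_def k_def by linarith+
  have S: "c * k \<le> kern_mass \<zeta>" using kern_mass_bounds(1)[OF \<zeta>] by (simp add: c_def k_def)
  have "drift_offset - 2 * m * kern_mass \<zeta> \<le> - (m * c * k)"
    using big mult_left_mono[OF S, of m] m by (simp add: c_def k_def m_def algebra_simps)
  then have "(drift_offset - 2 * m * kern_mass \<zeta>) / (2 * t) \<le> - (m * c * k) / (2 * t)"
    using t by (intro divide_right_mono) auto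
  also have "\<dots> \<le> - (m * c * k) / (2 * (sqrt a * k))"
    using t m c k a_pos by (intro divide_left_mono_neg) (auto intro!: mult_pos_pos)
  also have "\<dots> = - (m * c / (2 * sqrt a))" using k by simp
  finally have drift: "(drift_offset - 2 * m * kern_mass \<zeta>) / (2 * t) \<le> - (m * c / (2 * sqrt a))" .
  have "m * kern_mass \<zeta> \<le> kern_mass \<zeta>"
    using mult_right_mono[OF m(2) kern_mass_nonneg[of \<zeta>]] by simp
  then have "0 \<le> (2 * t\<^sup>2 + drift_offset - 2 * m * kern_mass \<zeta>) / (2 * t)"
    using kern_quad_ge_size[of l a \<zeta>] kern_mass_bounds(2)[OF \<zeta>] drift_offset_nonneg t l_pos a_pos
    by (intro divide_nonneg_pos) (auto simp: k_def)
  then have nonneg: "0 \<le> t + (drift_offset - 2 * m * kern_mass \<zeta>) / (2 * t)"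
    using t by (simp add: power2_eq_square field_simps)
  have "step_exp l r lam G (a_norm l a) \<zeta> + ennreal (m * c / (2 * sqrt a))
      \<le> ennreal (t + (drift_offset - 2 * m * kern_mass \<zeta>) / (2 * t)) + ennreal (m * c / (2 * sqrt a))"
    using step_exp_le_drift[OF \<zeta> ne] by (intro add_right_mono) (simp add: t_def m_def)
  also have "\<dots> = ennreal (t + (drift_offset - 2 * m * kern_mass \<zeta>) / (2 * t) + m * c / (2 * sqrt a))"
    using nonneg m c a_pos by (simp add: ennreal_plus[symmetric] del: ennreal_plus)
  also have "\<dots> \<le> ennreal t"
    using drift by (intro ennreal_leI) linarith
  finally show ?thesis by (simp add: t_def m_def c_def)
qed

lemma negative_drift:
  assumes stable: "mean_arrivals < 1"
  shows "\<exists>\<alpha>>0. \<exists>n::nat. \<forall>\<zeta>\<in>count_meas l. size \<zeta> > n \<longrightarrow>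
           step_exp l r lam G (a_norm l a) \<zeta> + ennreal \<alpha> \<le> ennreal (a_norm l a \<zeta>)"
proof (intro exI conjI ballI impI)
  define c where "c = a\<^sup>2 / (4 * l)"
  have c: "0 < c" using a_pos l_pos by (simp add: c_def)
  show "0 < (1 - mean_arrivals) * c / (2 * sqrt a)" using stable c a_pos by simp
  fix \<zeta> assume \<zeta>: "\<zeta> \<in> count_meas l" and big: "size \<zeta> > nat \<lceil>drift_offset / ((1 - mean_arrivals) * c)\<rceil>"
  have "drift_offset / ((1 - mean_arrivals) * c) \<le> real (size \<zeta>)"
    using big by linarith
  then have "drift_offset \<le> (1 - mean_arrivals) * c * real (size \<zeta>)"
    using stable c by (simp add: divide_le_eq mult.commute)
  then show "step_exp l r lam G (a_norm l a) \<zeta> + ennreal ((1 - mean_arrivals) * c / (2 * sqrt a))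
      \<le> ennreal (a_norm l a \<zeta>)"
    using \<zeta> big stable unfolding c_def
    by (intro step_exp_add_le_of_large) (auto simp: count_meas_def circ_def)
qed

lemma bounded_drift:
  assumes stable: "mean_arrivals < 1"
  shows "\<exists>b>0. \<forall>\<zeta>\<in>count_meas l. step_exp l r lam G (a_norm l a) \<zeta> \<le> ennreal (a_norm l a \<zeta> + b)"
proof (intro exI conjI ballI)
  define b where "b = (1 + drift_offset) / 2 + drift_offset / (2 * sqrt a)"
  have K: "0 \<le> drift_offset / (2 * sqrt a)" using drift_offset_nonneg a_pos by simp
  show "0 < b" unfolding b_def using K drift_offset_nonneg by (intro add_pos_nonneg) auto
  fix \<zeta> assume \<zeta>: "\<zeta> \<in> count_meas l"
  have sub: "set_mset \<zeta> \<subseteq> {0..<l}" using \<zeta> by (simp add: count_meas_def circ_def)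
  show "step_exp l r lam G (a_norm l a) \<zeta> \<le> ennreal (a_norm l a \<zeta> + b)"
  proof (cases "\<zeta> = {#}")
    case True
    have "0 \<le> a_norm l a \<zeta>" by (simp add: a_norm_eq_sqrt_kern_quad kern_quad_nonneg)
    then have "(1 + drift_offset) / 2 \<le> a_norm l a \<zeta> + b"
      using K unfolding b_def by linarith
    then show ?thesis
      using order_trans[OF step_exp_empty_le ennreal_leI] True by simp
  next
    case False
    define t where "t = a_norm l a \<zeta>"
    have "a * 1 \<le> a * real (size \<zeta>)"
      using False a_pos by (intro mult_left_mono) (auto simp: Suc_le_eq nonempty_has_size)
    then have "sqrt a \<le> sqrt (a * real (size \<zeta>))" by simp
    then have "sqrt a \<le> t" using a_norm_bounds(2)[OF sub] unfolding t_def by linarith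
    then have t: "sqrt a \<le> t" "0 < t" using real_sqrt_gt_zero[OF a_pos] by linarith+
    have "(drift_offset - 2 * (1 - mean_arrivals) * kern_mass \<zeta>) / (2 * t) \<le> drift_offset / (2 * t)"
      using stable kern_mass_nonneg[of \<zeta>] t by (intro divide_right_mono) auto
    also have "\<dots> \<le> drift_offset / (2 * sqrt a)"
      using drift_offset_nonneg t a_pos by (intro divide_left_mono) auto
    also have "\<dots> \<le> b" using drift_offset_nonneg by (simp add: b_def)
    finally show ?thesis
      using order_trans[OF step_exp_le_drift[OF sub False] ennreal_leI] by (simp add: t_def)
  qed
qed

end

theorem lemma9:
  fixes l r lam a :: real and G :: "real measure"
  assumes "l > 0" and "r > 0" and "lam > 0"
    and "prob_space G" and "sets G = sets borel" and "AE s in G. 0 \<le> s"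
    and "lam * (\<integral>s. s \<partial>G) < 1"
    and "(\<integral>\<^sup>+ s. ennreal (s ^ 2) \<partial>G) < \<infinity>"
    and "0 < a" and "a \<le> min (l / 2) (2 * r)"
  shows "\<exists>\<alpha>>0. \<exists>b>0. \<exists>n::nat.
           (\<forall>\<zeta>\<in>count_meas l. size \<zeta> > n \<longrightarrow>
              step_exp l r lam G (a_norm l a) \<zeta> + ennreal \<alpha> \<le> ennreal (a_norm l a \<zeta>)) \<and>
           (\<forall>\<zeta>\<in>count_meas l. size \<zeta> \<le> n \<longrightarrow>
              step_exp l r lam G (a_norm l a) \<zeta> \<le> ennreal (a_norm l a \<zeta> + b))"
proof -
  interpret G: prob_space G by (rule assms(4))
  interpret greedy_polling l r a G lam
    by unfold_locales (use assms in \<open>simp_all add: min_def split: if_splits\<close>)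
  have stable: "mean_arrivals < 1" using assms(7) by (simp add: mean_arrivals_def)
  obtain \<alpha> n where "\<alpha> > 0" and "\<forall>\<zeta>\<in>count_meas l. size \<zeta> > n \<longrightarrow>
      step_exp l r lam G (a_norm l a) \<zeta> + ennreal \<alpha> \<le> ennreal (a_norm l a \<zeta>)"
    using negative_drift[OF stable] by blast
  moreover obtain b where "b > 0" and "\<forall>\<zeta>\<in>count_meas l. step_exp l r lam G (a_norm l a) \<zeta> \<le> ennreal (a_norm l a \<zeta> + b)"
    using bounded_drift[OF stable] by blast
  ultimately show ?thesis by blast
qed

end
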